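(* Let $R,S$ be rings with identity and ring homomorphisms $\rho:R\to S$, $\iota:S\to R$ with $\rho\iota=\mathrm{id}_S$. Let $M\alpha L$ be a retractive pair and $n\ge 0$. If $M$ is of type $FP_n$ as a left $R$-module, then there exist retractive pairs $P_i\beta_iF_i$ ($0\le i\le n$), with each $P_i$ a finitely generated free left $R$-module and each $F_i$ a finitely generated free left $S$-module, and mappings of retractive pairs $(\partial_0,\delta_0):P_0\beta_0F_0\to M\alpha L$ and $(\partial_i,\delta_i):P_i\beta_iF_i\to P_{i-1}\beta_{i-1}F_{i-1}$ ($1\le i\le n$), such that $\mathrm{Im}(\partial_0,\delta_0)=M\alpha L$ and $\mathrm{Im}(\partial_{i+1},\delta_{i+1})=\mathrm{Ker}(\partial_i,\delta_i)$ for $0\le i<n$. In particular $0\leftarrow L\xleftarrow{\delta_0}F_0\xleftarrow{\delta_1}F_1\leftarrow\cdots\xleftarrow{\delta_n}F_n$ is a partial free resolution of $L$, so $L$ is of type $FP_n$ as a left $S$-module.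
   Context: A module is of type $FP_n$ if there is an exact sequence $0\leftarrow M\leftarrow P_0\leftarrow\cdots\leftarrow P_n$ with $P_0,\dots,P_n$ finitely generated free modules. A (left) retractive pair $M\alpha L$ consists of a left $R$-module $M$, a left $S$-module $L$, and abelian group homomorphisms $\alpha^+:M\to L$, $\alpha^-:L\to M$ with $\alpha^+\alpha^-=\mathrm{id}_L$, where $\alpha^+$ is an $R$-module homomorphism (with $L$ an $R$-module via $\rho$) and $\alpha^-$ is an $S$-module homomorphism (with $M$ an $S$-module via $\iota$). A mapping $(\phi,\psi):M\alpha L\to M'\beta L'$ consists of an $R$-module homomorphism $\phi:M\to M'$ and an $S$-module homomorphism $\psi:L\to L'$ with $\beta^+\phi=\psi\alpha^+$ and $\phi\alpha^-=\beta^-\psi$. Then $\alpha^\pm$ restrict to give the retractive pair $\mathrm{Ker}(\phi,\psi)$ consisting of $\mathrm{Ker}\phi$, $\mathrm{Ker}\psi$ with maps $\alpha^+,\alpha^-$, and $\beta^\pm$ restrict to give the retractive pair $\mathrm{Im}(\phi,\psi)$ consisting of $\mathrm{Im}\phi$, $\mathrm{Im}\psi$ with maps $\beta^+,\beta^-$. Equality of retractive pairs here means equality of both underlying modules (as subpairs). *)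

theory Defs
  imports "HOL-Algebra.Algebra"
begin

text \<open>Left modules over a not necessarily commutative ring with identity
  (the HOL-Algebra locale module requires a commutative ring).\<close>

locale left_module = R?: ring R + M?: abelian_group M
  for R :: "('a, 'c) ring_scheme" (structure) and M :: "('a, 'b, 'd) module_scheme" (structure) +
  assumes smult_closed:
      "\<lbrakk> a \<in> carrier R; x \<in> carrier M \<rbrakk> \<Longrightarrow> a \<odot>\<^bsub>M\<^esub> x \<in> carrier M"
    and smult_l_distr:
      "\<lbrakk> a \<in> carrier R; b \<in> carrier R; x \<in> carrier M \<rbrakk> \<Longrightarrow>
      (a \<oplus> b) \<odot>\<^bsub>M\<^esub> x = a \<odot>\<^bsub>M\<^esub> x \<oplus>\<^bsub>M\<^esub> b \<odot>\<^bsub>M\<^esub> x"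
    and smult_r_distr:
      "\<lbrakk> a \<in> carrier R; x \<in> carrier M; y \<in> carrier M \<rbrakk> \<Longrightarrow>
      a \<odot>\<^bsub>M\<^esub> (x \<oplus>\<^bsub>M\<^esub> y) = a \<odot>\<^bsub>M\<^esub> x \<oplus>\<^bsub>M\<^esub> a \<odot>\<^bsub>M\<^esub> y"
    and smult_assoc1:
      "\<lbrakk> a \<in> carrier R; b \<in> carrier R; x \<in> carrier M \<rbrakk> \<Longrightarrow>
      (a \<otimes> b) \<odot>\<^bsub>M\<^esub> x = a \<odot>\<^bsub>M\<^esub> (b \<odot>\<^bsub>M\<^esub> x)"
    and smult_one:
      "x \<in> carrier M \<Longrightarrow> \<one> \<odot>\<^bsub>M\<^esub> x = x"

definition lmod_hom ::
  "('a, 'c) ring_scheme \<Rightarrow> ('a, 'b, 'd) module_scheme \<Rightarrow> ('a, 'e, 'f) module_scheme \<Rightarrow> ('b \<Rightarrow> 'e) set"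
  where "lmod_hom R M N =
    {h. h \<in> carrier M \<rightarrow> carrier N \<and>
        (\<forall>x\<in>carrier M. \<forall>y\<in>carrier M. h (x \<oplus>\<^bsub>M\<^esub> y) = h x \<oplus>\<^bsub>N\<^esub> h y) \<and>
        (\<forall>a\<in>carrier R. \<forall>x\<in>carrier M. h (a \<odot>\<^bsub>M\<^esub> x) = a \<odot>\<^bsub>N\<^esub> h x)}"

definition restrict_scalars ::
  "('a \<Rightarrow> 's) \<Rightarrow> ('s, 'b) module \<Rightarrow> ('a, 'b) module"
  where "restrict_scalars f N =
    \<lparr> carrier = carrier N, monoid.mult = monoid.mult N, one = one N,
      ring.zero = ring.zero N, ring.add = ring.add N, smult = (\<lambda>a x. f a \<odot>\<^bsub>N\<^esub> x) \<rparr>"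

definition mod_kernel :: "('a, 'b, 'd) module_scheme \<Rightarrow> ('s, 'e, 'f) module_scheme \<Rightarrow> ('b \<Rightarrow> 'e) \<Rightarrow> 'b set"
  where "mod_kernel M N h = {x \<in> carrier M. h x = \<zero>\<^bsub>N\<^esub>}"

definition fg_free :: "('a, 'c) ring_scheme \<Rightarrow> ('a, 'b) module \<Rightarrow> bool"
  where "fg_free R P \<longleftrightarrow> left_module R P \<and>
    (\<exists>B. finite B \<and> B \<subseteq> carrier P \<and>
       (\<forall>x\<in>carrier P. \<exists>!c. c \<in> B \<rightarrow>\<^sub>E carrier R \<and>
            x = finsum P (\<lambda>b. c b \<odot>\<^bsub>P\<^esub> b) B))"

text \<open>The free modules are taken with carrier type nat => 'a (every f.g. free module is
  isomorphic to one of this type, namely R^k).\<close>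
definition FP :: "nat \<Rightarrow> ('a, 'c) ring_scheme \<Rightarrow> ('a, 'b) module \<Rightarrow> bool"
  where "FP n R M \<longleftrightarrow> left_module R M \<and>
    (\<exists>(P :: nat \<Rightarrow> ('a, nat \<Rightarrow> 'a) module) d0 d.
       (\<forall>i\<le>n. fg_free R (P i)) \<and>
       d0 \<in> lmod_hom R (P 0) M \<and> d0 ` carrier (P 0) = carrier M \<and>
       (\<forall>i\<in>{1..n}. d i \<in> lmod_hom R (P i) (P (i - 1))) \<and>
       (n \<ge> 1 \<longrightarrow> d 1 ` carrier (P 1) = mod_kernel (P 0) M d0) \<and>
       (\<forall>i. 1 \<le> i \<and> i < n \<longrightarrow> d (Suc i) ` carrier (P (Suc i)) = mod_kernel (P i) (P (i - 1)) (d i)))"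

text \<open>Retractive pair M alpha L (R-module M, S-module L, alpha+ : M -> L, alpha- : L -> M).\<close>
definition retractive_pair ::
  "('a, 'c) ring_scheme \<Rightarrow> ('s, 'e) ring_scheme \<Rightarrow> ('a \<Rightarrow> 's) \<Rightarrow> ('s \<Rightarrow> 'a) \<Rightarrow>
   ('a, 'm) module \<Rightarrow> ('s, 'l) module \<Rightarrow> ('m \<Rightarrow> 'l) \<Rightarrow> ('l \<Rightarrow> 'm) \<Rightarrow> bool"
  where "retractive_pair R S \<rho> \<iota> M L ap am \<longleftrightarrow>
    left_module R M \<and> left_module S L \<and>
    ap \<in> lmod_hom R M (restrict_scalars \<rho> L) \<and>
    am \<in> lmod_hom S L (restrict_scalars \<iota> M) \<and>
    (\<forall>y\<in>carrier L. ap (am y) = y)"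

definition rp_mapping ::
  "('a, 'c) ring_scheme \<Rightarrow> ('s, 'e) ring_scheme \<Rightarrow>
   ('a, 'm) module \<Rightarrow> ('s, 'l) module \<Rightarrow> ('m \<Rightarrow> 'l) \<Rightarrow> ('l \<Rightarrow> 'm) \<Rightarrow>
   ('a, 'm2) module \<Rightarrow> ('s, 'l2) module \<Rightarrow> ('m2 \<Rightarrow> 'l2) \<Rightarrow> ('l2 \<Rightarrow> 'm2) \<Rightarrow>
   ('m \<Rightarrow> 'm2) \<Rightarrow> ('l \<Rightarrow> 'l2) \<Rightarrow> bool"
  where "rp_mapping R S M L ap am M' L' bp bm \<phi> \<psi> \<longleftrightarrow>
    \<phi> \<in> lmod_hom R M M' \<and> \<psi> \<in> lmod_hom S L L' \<and>
    (\<forall>x\<in>carrier M. bp (\<phi> x) = \<psi> (ap x)) \<and>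
    (\<forall>y\<in>carrier L. \<phi> (am y) = bm (\<psi> y))"

end

theory Submission
  imports Defs
begin

text \<open>
  Resolve \<open>M\<close> by standard free modules \<open>R\<^sup>k\<close>, with augmentation \<open>D0 : R\<^sup>K \<rightarrow> M\<close> and next
  differential \<open>D1 : R\<^sup>K\<^sup>' \<rightarrow> R\<^sup>K\<close>, and let \<open>w\<^sub>j = D0 e\<^sub>j\<close>. The \<open>S\<close>-linear map \<open>\<delta> : S\<^sup>K \<rightarrow> L\<close>,
  \<open>e\<^sub>j \<mapsto> \<alpha>\<^sup>+ w\<^sub>j\<close>, and the \<open>R\<close>-linear map \<open>N : R\<^sup>K \<rightarrow> M\<close>, \<open>e\<^sub>j \<mapsto> \<alpha>\<^sup>- (\<alpha>\<^sup>+ w\<^sub>j)\<close>, satisfy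
  \<open>\<alpha>\<^sup>+ D0 = \<delta> \<rho>\<close>, \<open>\<alpha>\<^sup>+ N = \<delta> \<rho>\<close> and \<open>\<alpha>\<^sup>- \<delta> = N \<iota>\<close> (coefficientwise), although \<open>\<alpha>\<^sup>- \<alpha>\<^sup>+\<close> itself
  is not \<open>R\<close>-linear. Hence \<open>(D0 + N, \<delta>)\<close> maps the retractive pair formed by \<open>R\<^sup>K \<oplus> R\<^sup>K\<close> and
  \<open>S\<^sup>K\<close>, with \<open>\<beta>\<^sup>+ (t, s) = \<rho> (t + s)\<close> and \<open>\<beta>\<^sup>- y = (0, \<iota> y)\<close>, onto \<open>M \<alpha> L\<close>. Lifting \<open>N\<close>
  through \<open>D0\<close> to \<open>\<sigma>\<close>, the map \<open>(t, s) \<mapsto> (D1 t - \<sigma> s, s)\<close> sends \<open>R\<^sup>K\<^sup>' \<oplus> R\<^sup>K\<close> onto the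
  kernel of \<open>D0 + N\<close> and has the same kernel as \<open>D1\<close>; so that kernel is again of type
  \<open>FP\<^sub>n\<^sub>-\<^sub>1\<close>. The two kernels form a retractive pair, and the construction is iterated on it.
\<close>

section \<open>Module homomorphisms and submodules\<close>

lemma restrict_scalars_simps [simp]:
  "carrier (restrict_scalars f N) = carrier N"
  "x \<oplus>\<^bsub>restrict_scalars f N\<^esub> y = x \<oplus>\<^bsub>N\<^esub> y"
  "\<zero>\<^bsub>restrict_scalars f N\<^esub> = \<zero>\<^bsub>N\<^esub>"
  "a \<odot>\<^bsub>restrict_scalars f N\<^esub> x = f a \<odot>\<^bsub>N\<^esub> x"
  by (simp_all add: restrict_scalars_def)

lemma restrict_scalars_id: "restrict_scalars (\<lambda>a. a) N = N"
  by (simp add: restrict_scalars_def)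

lemma restrict_scalars_update_carrier:
  "restrict_scalars f (N\<lparr>carrier := Z\<rparr>) = (restrict_scalars f N)\<lparr>carrier := Z\<rparr>"
  by (simp add: restrict_scalars_def)

lemma lmod_homI:
  assumes "\<And>x. x \<in> carrier M \<Longrightarrow> h x \<in> carrier N"
    and "\<And>x y. x \<in> carrier M \<Longrightarrow> y \<in> carrier M \<Longrightarrow> h (x \<oplus>\<^bsub>M\<^esub> y) = h x \<oplus>\<^bsub>N\<^esub> h y"
    and "\<And>a x. a \<in> carrier R \<Longrightarrow> x \<in> carrier M \<Longrightarrow> h (a \<odot>\<^bsub>M\<^esub> x) = a \<odot>\<^bsub>N\<^esub> h x"
  shows "h \<in> lmod_hom R M N"
  using assms by (auto simp: lmod_hom_def)

lemma lmod_homD: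
  assumes "h \<in> lmod_hom R M N"
  shows lmod_hom_closed: "\<And>x. x \<in> carrier M \<Longrightarrow> h x \<in> carrier N"
    and lmod_hom_add: "\<And>x y. x \<in> carrier M \<Longrightarrow> y \<in> carrier M \<Longrightarrow> h (x \<oplus>\<^bsub>M\<^esub> y) = h x \<oplus>\<^bsub>N\<^esub> h y"
    and lmod_hom_smult: "\<And>a x. a \<in> carrier R \<Longrightarrow> x \<in> carrier M \<Longrightarrow> h (a \<odot>\<^bsub>M\<^esub> x) = a \<odot>\<^bsub>N\<^esub> h x"
  using assms by (auto simp: lmod_hom_def)

lemma lmod_hom_id: "(\<lambda>x. x) \<in> lmod_hom R M M"
  by (simp add: lmod_hom_def)

lemma lmod_hom_comp:
  "f \<in> lmod_hom R A B \<Longrightarrow> g \<in> lmod_hom R B C \<Longrightarrow> (\<lambda>x. g (f x)) \<in> lmod_hom R A C"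
  by (auto simp: lmod_hom_def Pi_iff)

lemma lmod_hom_comp_restrict_scalars:
  assumes "f \<in> lmod_hom S A (restrict_scalars \<iota> B)" "g \<in> lmod_hom R B C" "\<iota> \<in> carrier S \<rightarrow> carrier R"
  shows "(\<lambda>x. g (f x)) \<in> lmod_hom S A (restrict_scalars \<iota> C)"
  using assms by (auto simp: lmod_hom_def Pi_iff)

lemma lmod_hom_submodule_iff:
  "Z \<subseteq> carrier B \<Longrightarrow> h \<in> lmod_hom R A (B\<lparr>carrier := Z\<rparr>) \<longleftrightarrow> h \<in> lmod_hom R A B \<and> h ` carrier A \<subseteq> Z"
  by (auto simp: lmod_hom_def)

lemma lmod_hom_restrict_domain:
  "h \<in> lmod_hom R B C \<Longrightarrow> Z \<subseteq> carrier B \<Longrightarrow> h \<in> lmod_hom R (B\<lparr>carrier := Z\<rparr>) C"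
  by (auto simp: lmod_hom_def Pi_iff subset_iff)

lemma abelian_group_homI':
  assumes "abelian_group G" "abelian_group H" "h \<in> carrier G \<rightarrow> carrier H"
    and "\<And>x y. x \<in> carrier G \<Longrightarrow> y \<in> carrier G \<Longrightarrow> h (x \<oplus>\<^bsub>G\<^esub> y) = h x \<oplus>\<^bsub>H\<^esub> h y"
  shows "abelian_group_hom G H h"
  using assms
  by (intro abelian_group_homI group_hom.intro group_hom_axioms.intro abelian_group.a_group)
     (auto simp: hom_def)

lemma lmod_hom_abelian_group_hom:
  "abelian_group M \<Longrightarrow> abelian_group N \<Longrightarrow> h \<in> lmod_hom R M N \<Longrightarrow> abelian_group_hom M N h"
  by (rule abelian_group_homI') (auto simp: lmod_hom_def)

lemma semilinear_abelian_group_hom: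
  "abelian_group M \<Longrightarrow> abelian_group N \<Longrightarrow> h \<in> lmod_hom R M (restrict_scalars f N) \<Longrightarrow>
    abelian_group_hom M N h"
  by (rule abelian_group_homI') (auto simp: lmod_hom_def)

lemma (in abelian_group_hom) hom_finsum:
  assumes "finite I" "f \<in> I \<rightarrow> carrier G"
  shows "h (finsum G f I) = finsum H (\<lambda>i. h (f i)) I"
  using assms by (induction I rule: finite_induct) (auto simp: Pi_iff)

lemma (in abelian_group) a_inv_zero [simp]: "\<ominus> \<zero> = \<zero>"
  using minus_equality[OF l_zero] by simp

lemma mod_kernel_update_carrier [simp]: "mod_kernel A (B\<lparr>carrier := Z\<rparr>) h = mod_kernel A B h"
  by (simp add: mod_kernel_def)

lemma mod_kernel_eq_a_kernel: "mod_kernel M N h = a_kernel M N h"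
  by (simp add: mod_kernel_def a_kernel_def kernel_def)

context left_module
begin

lemma smult_l_null [simp]: "x \<in> carrier M \<Longrightarrow> \<zero>\<^bsub>R\<^esub> \<odot>\<^bsub>M\<^esub> x = \<zero>\<^bsub>M\<^esub>"
  by (metis M.add.r_cancel_one' R.add.l_one R.zero_closed smult_closed smult_l_distr)

lemma smult_r_null [simp]: "a \<in> carrier R \<Longrightarrow> a \<odot>\<^bsub>M\<^esub> \<zero>\<^bsub>M\<^esub> = \<zero>\<^bsub>M\<^esub>"
  by (metis M.add.r_cancel_one' M.l_zero M.zero_closed smult_closed smult_r_distr)

lemma smult_r_minus:
  assumes "a \<in> carrier R" "x \<in> carrier M"
  shows "a \<odot>\<^bsub>M\<^esub> (\<ominus>\<^bsub>M\<^esub> x) = \<ominus>\<^bsub>M\<^esub> (a \<odot>\<^bsub>M\<^esub> x)"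
proof -
  have "a \<odot>\<^bsub>M\<^esub> (\<ominus>\<^bsub>M\<^esub> x) \<oplus>\<^bsub>M\<^esub> a \<odot>\<^bsub>M\<^esub> x = \<zero>\<^bsub>M\<^esub>"
    using assms by (simp flip: smult_r_distr add: M.l_neg)
  then show ?thesis
    using assms by (simp add: M.minus_equality smult_closed)
qed

lemma finsum_smult_ldistr:
  "finite A \<Longrightarrow> a \<in> carrier R \<Longrightarrow> f \<in> A \<rightarrow> carrier M \<Longrightarrow>
    a \<odot>\<^bsub>M\<^esub> finsum M f A = finsum M (\<lambda>i. a \<odot>\<^bsub>M\<^esub> f i) A"
  by (induction A rule: finite_induct) (auto simp: Pi_iff smult_r_distr smult_closed)

lemma zero_lmod_hom: "(\<lambda>x. \<zero>\<^bsub>M\<^esub>) \<in> lmod_hom R A M"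
  by (rule lmod_homI) simp_all

lemma a_inv_lmod_hom: "(\<lambda>x. \<ominus>\<^bsub>M\<^esub> x) \<in> lmod_hom R M M"
  by (rule lmod_homI) (simp_all add: M.minus_add smult_r_minus)

lemma lmod_hom_add_pointwise:
  assumes "f \<in> lmod_hom R A M" "g \<in> lmod_hom R A M"
  shows "(\<lambda>x. f x \<oplus>\<^bsub>M\<^esub> g x) \<in> lmod_hom R A M"
  using lmod_homD[OF assms(1)] lmod_homD[OF assms(2)]
  by (intro lmod_homI) (simp_all add: M.a_ac smult_r_distr)

lemma left_module_submodule:
  assumes "additive_subgroup Z M" "\<And>a x. a \<in> carrier R \<Longrightarrow> x \<in> Z \<Longrightarrow> a \<odot>\<^bsub>M\<^esub> x \<in> Z"
  shows "left_module R (M\<lparr>carrier := Z\<rparr>)"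
proof -
  interpret Z: additive_subgroup Z M by fact
  have sub: "x \<in> Z \<Longrightarrow> x \<in> carrier M" for x
    using Z.a_subset by blast
  have "abelian_group (M\<lparr>carrier := Z\<rparr>)"
  proof (rule abelian_groupI)
    fix x assume "x \<in> carrier (M\<lparr>carrier := Z\<rparr>)"
    then show "\<exists>y\<in>carrier (M\<lparr>carrier := Z\<rparr>). y \<oplus>\<^bsub>M\<lparr>carrier := Z\<rparr>\<^esub> x = \<zero>\<^bsub>M\<lparr>carrier := Z\<rparr>\<^esub>"
      by (intro bexI[of _ "\<ominus>\<^bsub>M\<^esub> x"]) (simp_all add: sub M.l_neg)
  qed (simp_all add: sub M.a_ac)
  then show ?thesis
    using assms(2)
    by (intro left_module.intro R.ring_axioms left_module_axioms.intro)
       (simp_all add: sub smult_l_distr smult_r_distr smult_assoc1 smult_one)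
qed

lemma left_module_kernel:
  assumes "left_module R N" "h \<in> lmod_hom R M N"
  shows "left_module R (M\<lparr>carrier := mod_kernel M N h\<rparr>)"
proof (rule left_module_submodule)
  interpret N: left_module R N by fact
  interpret h: abelian_group_hom M N h
    using lmod_hom_abelian_group_hom assms(2) M.abelian_group_axioms N.abelian_group_axioms by blast
  show "additive_subgroup (mod_kernel M N h) M"
    unfolding mod_kernel_eq_a_kernel by (rule h.additive_subgroup_a_kernel)
  show "a \<odot>\<^bsub>M\<^esub> x \<in> mod_kernel M N h" if "a \<in> carrier R" "x \<in> mod_kernel M N h" for a x
    using that by (simp add: mod_kernel_def smult_closed lmod_hom_smult[OF assms(2)])
qed

end

section \<open>The standard free modules\<close>

text \<open>The module \<open>R\<^sup>k\<close> of coordinate vectors vanishing from index \<open>k\<close> on; the multiplicative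
  fields of the record are irrelevant.\<close>

definition std_free :: "('a, 'c) ring_scheme \<Rightarrow> nat \<Rightarrow> ('a, nat \<Rightarrow> 'a) module" where
  "std_free R k =
    \<lparr>carrier = {x. (\<forall>i<k. x i \<in> carrier R) \<and> (\<forall>i\<ge>k. x i = \<zero>\<^bsub>R\<^esub>)},
     monoid.mult = (\<lambda>x y i. x i \<otimes>\<^bsub>R\<^esub> y i), monoid.one = (\<lambda>i. \<one>\<^bsub>R\<^esub>),
     ring.zero = (\<lambda>i. \<zero>\<^bsub>R\<^esub>), ring.add = (\<lambda>x y i. x i \<oplus>\<^bsub>R\<^esub> y i),
     smult = (\<lambda>a x i. a \<otimes>\<^bsub>R\<^esub> x i)\<rparr>"

lemma std_free_simps [simp]:
  "\<zero>\<^bsub>std_free R k\<^esub> = (\<lambda>i. \<zero>\<^bsub>R\<^esub>)"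
  "x \<oplus>\<^bsub>std_free R k\<^esub> y = (\<lambda>i. x i \<oplus>\<^bsub>R\<^esub> y i)"
  "a \<odot>\<^bsub>std_free R k\<^esub> x = (\<lambda>i. a \<otimes>\<^bsub>R\<^esub> x i)"
  by (simp_all add: std_free_def)

lemma std_free_carrier:
  "x \<in> carrier (std_free R k) \<longleftrightarrow> (\<forall>i<k. x i \<in> carrier R) \<and> (\<forall>i\<ge>k. x i = \<zero>\<^bsub>R\<^esub>)"
  by (simp add: std_free_def)

lemma std_free_update_carrier: "(std_free R k)\<lparr>carrier := Z\<rparr> = (std_free R k')\<lparr>carrier := Z\<rparr>"
  by (simp add: std_free_def)

context ring
begin

lemma std_free_coord: "x \<in> carrier (std_free R k) \<Longrightarrow> x i \<in> carrier R"
  by (cases "i < k") (auto simp: std_free_carrier)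

lemma std_free_mono: "k \<le> k' \<Longrightarrow> carrier (std_free R k) \<subseteq> carrier (std_free R k')"
  by (auto simp: std_free_carrier std_free_coord)

lemma left_module_std_free: "left_module R (std_free R k)"
proof -
  note coord = std_free_coord
  have "abelian_group (std_free R k)"
  proof (rule abelian_groupI)
    fix x assume x: "x \<in> carrier (std_free R k)"
    show "\<exists>y\<in>carrier (std_free R k). y \<oplus>\<^bsub>std_free R k\<^esub> x = \<zero>\<^bsub>std_free R k\<^esub>"
      using x coord[OF x] by (intro bexI[of _ "\<lambda>i. \<ominus> x i"]) (auto simp: std_free_carrier l_neg)
  qed (auto simp: std_free_carrier coord a_ac)
  then show ?thesis
    by (intro left_module.intro ring_axioms left_module_axioms.intro)
       (auto simp: std_free_carrier coord l_distr r_distr m_assoc)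
qed

end

lemma coeff_map_lmod_hom:
  assumes "ring R" "ring S" "f \<in> ring_hom R S"
  shows "(\<lambda>x i. f (x i)) \<in> lmod_hom R (std_free R k) (restrict_scalars f (std_free S k))"
  using ring.std_free_coord[OF assms(1)] ring_hom_zero[OF assms(3,1,2)]
  by (intro lmod_homI) (auto simp: std_free_carrier ring_hom_closed[OF assms(3)]
      ring_hom_add[OF assms(3)] ring_hom_mult[OF assms(3)])

section \<open>Linear combinations\<close>

definition lincomb :: "('a, 'b, 'd) module_scheme \<Rightarrow> (nat \<Rightarrow> 'b) \<Rightarrow> nat \<Rightarrow> (nat \<Rightarrow> 'a) \<Rightarrow> 'b" where
  "lincomb M w k x = finsum M (\<lambda>j. x j \<odot>\<^bsub>M\<^esub> w j) {..<k}"

context left_module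
begin

lemma lincomb_closed:
  "\<forall>j<k. w j \<in> carrier M \<Longrightarrow> x \<in> carrier (std_free R k) \<Longrightarrow> lincomb M w k x \<in> carrier M"
  unfolding lincomb_def by (auto intro!: M.finsum_closed smult_closed R.std_free_coord)

lemma lincomb_cong:
  assumes "\<forall>j<k. w j \<in> carrier M" "\<forall>j<k. w' j = w j" "x \<in> carrier (std_free R k)"
  shows "lincomb M w' k x = lincomb M w k x"
  unfolding lincomb_def using assms
  by (intro M.finsum_cong') (auto intro!: smult_closed R.std_free_coord)

lemma lincomb_lmod_hom:
  assumes w: "\<forall>j<k. w j \<in> carrier M"
  shows "lincomb M w k \<in> lmod_hom R (std_free R k) M"
proof (rule lmod_homI)
  note coord = R.std_free_coord
  fix x y assume x: "x \<in> carrier (std_free R k)" and y: "y \<in> carrier (std_free R k)"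
  have "lincomb M w k (x \<oplus>\<^bsub>std_free R k\<^esub> y) = finsum M (\<lambda>j. x j \<odot>\<^bsub>M\<^esub> w j \<oplus>\<^bsub>M\<^esub> y j \<odot>\<^bsub>M\<^esub> w j) {..<k}"
    unfolding lincomb_def std_free_simps using w coord[OF x] coord[OF y]
    by (intro M.finsum_cong') (auto simp: smult_l_distr smult_closed)
  also have "\<dots> = lincomb M w k x \<oplus>\<^bsub>M\<^esub> lincomb M w k y"
    unfolding lincomb_def using w coord[OF x] coord[OF y]
    by (intro M.finsum_addf) (auto simp: smult_closed)
  finally show "lincomb M w k (x \<oplus>\<^bsub>std_free R k\<^esub> y) = lincomb M w k x \<oplus>\<^bsub>M\<^esub> lincomb M w k y" .
next
  note coord = R.std_free_coord
  fix a x assume a: "a \<in> carrier R" and x: "x \<in> carrier (std_free R k)"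
  have "lincomb M w k (a \<odot>\<^bsub>std_free R k\<^esub> x) = finsum M (\<lambda>j. a \<odot>\<^bsub>M\<^esub> (x j \<odot>\<^bsub>M\<^esub> w j)) {..<k}"
    unfolding lincomb_def std_free_simps using w a coord[OF x]
    by (intro M.finsum_cong') (auto simp: smult_assoc1 smult_closed)
  also have "\<dots> = a \<odot>\<^bsub>M\<^esub> lincomb M w k x"
    unfolding lincomb_def using w a coord[OF x]
    by (intro finsum_smult_ldistr[symmetric]) (auto simp: smult_closed)
  finally show "lincomb M w k (a \<odot>\<^bsub>std_free R k\<^esub> x) = a \<odot>\<^bsub>M\<^esub> lincomb M w k x" .
qed (use assms lincomb_closed in blast)

end

lemma lincomb_semilinear:
  assumes "left_module R M" "left_module S N" "h \<in> lmod_hom R M (restrict_scalars f N)"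
    and "\<forall>j<k. w j \<in> carrier M" "x \<in> carrier (std_free R k)"
  shows "h (lincomb M w k x) = lincomb N (\<lambda>j. h (w j)) k (\<lambda>i. f (x i))"
proof -
  interpret M: left_module R M by fact
  interpret N: left_module S N by fact
  interpret h: abelian_group_hom M N h
    using semilinear_abelian_group_hom assms(3) M.abelian_group_axioms N.abelian_group_axioms by blast
  have coord: "x i \<in> carrier R" for i
    using M.R.std_free_coord assms(5) by blast
  have terms: "x j \<odot>\<^bsub>M\<^esub> w j \<in> carrier M" if "j < k" for j
    using assms(4) that coord by (simp add: M.smult_closed)
  have "h (lincomb M w k x) = finsum N (\<lambda>j. h (x j \<odot>\<^bsub>M\<^esub> w j)) {..<k}"
    unfolding lincomb_def by (rule h.hom_finsum) (use terms in auto)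
  also have "\<dots> = lincomb N (\<lambda>j. h (w j)) k (\<lambda>i. f (x i))"
    unfolding lincomb_def
  proof (rule sym, rule N.finsum_cong')
    show "(\<lambda>j. h (x j \<odot>\<^bsub>M\<^esub> w j)) \<in> {..<k} \<rightarrow> carrier N"
      using terms by auto
    show "f (x j) \<odot>\<^bsub>N\<^esub> h (w j) = h (x j \<odot>\<^bsub>M\<^esub> w j)" if "j \<in> {..<k}" for j
      using lmod_hom_smult[OF assms(3) coord] assms(4) that by simp
  qed simp
  finally show ?thesis .
qed

lemma lincomb_linear:
  fixes N :: "('a, 'e) module"
  assumes "left_module R M" "left_module R N" "h \<in> lmod_hom R M N"
    and "\<forall>j<k. w j \<in> carrier M" "x \<in> carrier (std_free R k)"
  shows "h (lincomb M w k x) = lincomb N (\<lambda>j. h (w j)) k x"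
  using lincomb_semilinear[of R M R N h "\<lambda>a. a"] assms by (simp add: restrict_scalars_id)

definition unit_vec :: "('a, 'c) ring_scheme \<Rightarrow> nat \<Rightarrow> nat \<Rightarrow> 'a" where
  "unit_vec R j = (\<lambda>i. if i = j then \<one>\<^bsub>R\<^esub> else \<zero>\<^bsub>R\<^esub>)"

context ring
begin

lemma unit_vec_closed: "j < k \<Longrightarrow> unit_vec R j \<in> carrier (std_free R k)"
  by (simp add: unit_vec_def std_free_carrier)

lemma std_free_finsum_apply:
  assumes "finite I" "F \<in> I \<rightarrow> carrier (std_free R k)"
  shows "finsum (std_free R k) F I i = finsum R (\<lambda>j. F j i) I"
proof -
  interpret V: left_module R "std_free R k" by (rule left_module_std_free)
  show ?thesis
    using assms
  proof (induction I rule: finite_induct)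
    case (insert j I)
    have F: "F \<in> I \<rightarrow> carrier (std_free R k)" "F j \<in> carrier (std_free R k)"
      using insert.prems by auto
    have "(\<lambda>j. F j i) \<in> I \<rightarrow> carrier R" "F j i \<in> carrier R"
      using F std_free_coord by auto
    with insert.hyps insert.IH[OF F(1)] F show ?case
      by simp
  qed simp
qed

lemma lincomb_unit_vec:
  assumes x: "x \<in> carrier (std_free R k)"
  shows "lincomb (std_free R k) (unit_vec R) k x = x"
proof
  fix i
  have "(\<lambda>j. x j \<odot>\<^bsub>std_free R k\<^esub> unit_vec R j) \<in> {..<k} \<rightarrow> carrier (std_free R k)"
    using std_free_coord[OF x] by (auto simp: std_free_carrier unit_vec_def)
  then have "lincomb (std_free R k) (unit_vec R) k x i = finsum R (\<lambda>j. x j \<otimes> unit_vec R j i) {..<k}"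
    unfolding lincomb_def by (simp add: std_free_finsum_apply)
  also have "\<dots> = finsum R (\<lambda>j. if i = j then x j else \<zero>) {..<k}"
  proof (rule finsum_cong')
    show "x j \<otimes> unit_vec R j i = (if i = j then x j else \<zero>)" if "j \<in> {..<k}" for j
      using std_free_coord[OF x, of j] by (simp add: unit_vec_def)
  qed (auto simp: std_free_coord[OF x])
  also have "\<dots> = x i"
  proof (cases "i < k")
    case True
    then show ?thesis
      using std_free_coord[OF x] by (simp add: finsum_singleton)
  next
    case False
    then have "finsum R (\<lambda>j. if i = j then x j else \<zero>) {..<k} = finsum R (\<lambda>j. \<zero>) {..<k}"
      by (intro finsum_cong') auto
    with False x show ?thesis
      by (simp add: std_free_carrier)
  qed
  finally show "lincomb (std_free R k) (unit_vec R) k x i = x i" .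
qed

end

lemma lmod_hom_eq_lincomb:
  fixes M :: "('a, 'e) module"
  assumes "left_module R M" "h \<in> lmod_hom R (std_free R k) M" "x \<in> carrier (std_free R k)"
  shows "h x = lincomb M (\<lambda>j. h (unit_vec R j)) k x"
proof -
  interpret left_module R M by fact
  show ?thesis
    using lincomb_linear[OF R.left_module_std_free assms(1,2) _ assms(3), where w = "unit_vec R"] assms(3)
    by (simp add: R.lincomb_unit_vec R.unit_vec_closed)
qed

lemma std_free_lift:
  fixes A :: "('a, 'e) module" and M :: "('a, 'm) module"
  assumes "left_module R A" "left_module R M"
    and "D \<in> lmod_hom R A M" "D ` carrier A = carrier M" "h \<in> lmod_hom R (std_free R k) M"
  obtains \<sigma> where "\<sigma> \<in> lmod_hom R (std_free R k) A" "\<And>x. x \<in> carrier (std_free R k) \<Longrightarrow> D (\<sigma> x) = h x"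
proof -
  interpret A: left_module R A by fact
  interpret M: left_module R M by fact
  have "\<forall>j. \<exists>a. j < k \<longrightarrow> a \<in> carrier A \<and> D a = h (unit_vec R j)"
    using assms(4) lmod_hom_closed[OF assms(5) A.R.unit_vec_closed] by (metis imageE)
  then obtain s where s: "\<And>j. j < k \<Longrightarrow> s j \<in> carrier A \<and> D (s j) = h (unit_vec R j)"
    by metis
  show ?thesis
  proof
    show "lincomb A s k \<in> lmod_hom R (std_free R k) A"
      using s by (simp add: A.lincomb_lmod_hom)
    fix x assume x: "x \<in> carrier (std_free R k)"
    have "D (lincomb A s k x) = lincomb M (\<lambda>j. D (s j)) k x"
      using s x by (simp add: lincomb_linear[OF assms(1,2,3)])
    also have "\<dots> = lincomb M (\<lambda>j. h (unit_vec R j)) k x"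
      using s x lmod_hom_closed[OF assms(5) A.R.unit_vec_closed] by (intro M.lincomb_cong) auto
    also have "\<dots> = h x"
      using lmod_hom_eq_lincomb[OF assms(2,5) x] by simp
    finally show "D (lincomb A s k x) = h x" .
  qed
qed

section \<open>Finitely generated free modules are standard\<close>

lemma bij_betw_ex1_iff:
  assumes "bij_betw g A B"
  shows "(\<exists>!a. a \<in> A \<and> P (g a)) \<longleftrightarrow> (\<exists>!b. b \<in> B \<and> P b)"
  using assms unfolding bij_betw_def inj_on_def by blast

lemma bij_betw_iff_ex1:
  assumes "f ` A \<subseteq> B"
  shows "bij_betw f A B \<longleftrightarrow> (\<forall>y\<in>B. \<exists>!x. x \<in> A \<and> y = f x)"
  using assms unfolding bij_betw_def inj_on_def by blast

lemma coeff_vector_bij: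
  assumes inj: "inj_on b {..<k}"
  shows "bij_betw (\<lambda>c j. if j < k then c (b j) else \<zero>\<^bsub>R\<^esub>) (b ` {..<k} \<rightarrow>\<^sub>E carrier R) (carrier (std_free R k))"
proof (rule bij_betw_byWitness)
  let ?g = "\<lambda>c j. if j < k then c (b j) else \<zero>\<^bsub>R\<^esub>"
  let ?f' = "\<lambda>y. restrict (\<lambda>\<beta>. y (the_inv_into {..<k} b \<beta>)) (b ` {..<k})"
  have inv: "the_inv_into {..<k} b (b j) = j" if "j < k" for j
    using inj that by (simp add: the_inv_into_f_f)
  show "\<forall>c\<in>b ` {..<k} \<rightarrow>\<^sub>E carrier R. ?f' (?g c) = c"
  proof
    fix c assume c: "c \<in> b ` {..<k} \<rightarrow>\<^sub>E carrier R"
    show "?f' (?g c) = c"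
    proof
      fix \<beta>
      show "?f' (?g c) \<beta> = c \<beta>"
        using c PiE_arb[OF c, of \<beta>] by (cases "\<beta> \<in> b ` {..<k}") (auto simp: inv)
    qed
  qed
  show "\<forall>y\<in>carrier (std_free R k). ?g (?f' y) = y"
    by (auto simp: fun_eq_iff inv std_free_carrier)
  show "?g ` (b ` {..<k} \<rightarrow>\<^sub>E carrier R) \<subseteq> carrier (std_free R k)"
    by (auto simp: std_free_carrier PiE_iff)
  show "?f' ` carrier (std_free R k) \<subseteq> b ` {..<k} \<rightarrow>\<^sub>E carrier R"
    by (auto simp: std_free_carrier inv)
qed

lemma (in left_module) finsum_basis_eq_lincomb:
  assumes "inj_on b {..<k}" "\<forall>j<k. b j \<in> carrier M" "c \<in> b ` {..<k} \<rightarrow> carrier R"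
  shows "finsum M (\<lambda>\<beta>. c \<beta> \<odot>\<^bsub>M\<^esub> \<beta>) (b ` {..<k}) = lincomb M b k (\<lambda>j. if j < k then c (b j) else \<zero>\<^bsub>R\<^esub>)"
  unfolding lincomb_def using assms
  by (subst M.finsum_reindex) (auto intro!: M.finsum_cong' smult_closed)

lemma (in left_module) basis_unique_iff_lincomb_bij:
  assumes b: "inj_on b {..<k}" "\<forall>j<k. b j \<in> carrier M"
  shows "(\<forall>x\<in>carrier M. \<exists>!c. c \<in> b ` {..<k} \<rightarrow>\<^sub>E carrier R \<and> x = finsum M (\<lambda>\<beta>. c \<beta> \<odot>\<^bsub>M\<^esub> \<beta>) (b ` {..<k}))
    \<longleftrightarrow> bij_betw (lincomb M b k) (carrier (std_free R k)) (carrier M)"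
proof -
  let ?g = "\<lambda>c j. if j < k then c (b j) else \<zero>\<^bsub>R\<^esub>"
  have "c \<in> b ` {..<k} \<rightarrow>\<^sub>E carrier R \<and> x = finsum M (\<lambda>\<beta>. c \<beta> \<odot>\<^bsub>M\<^esub> \<beta>) (b ` {..<k})
      \<longleftrightarrow> c \<in> b ` {..<k} \<rightarrow>\<^sub>E carrier R \<and> x = lincomb M b k (?g c)" for x c
    using finsum_basis_eq_lincomb[OF b, of c] by (auto simp: PiE_def)
  then have "(\<exists>!c. c \<in> b ` {..<k} \<rightarrow>\<^sub>E carrier R \<and> x = finsum M (\<lambda>\<beta>. c \<beta> \<odot>\<^bsub>M\<^esub> \<beta>) (b ` {..<k}))
      \<longleftrightarrow> (\<exists>!y. y \<in> carrier (std_free R k) \<and> x = lincomb M b k y)" for x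
    using bij_betw_ex1_iff[OF coeff_vector_bij[OF b(1), of R], where P = "\<lambda>y. x = lincomb M b k y"] by simp
  moreover have "lincomb M b k ` carrier (std_free R k) \<subseteq> carrier M"
    using lincomb_closed b(2) by blast
  ultimately show ?thesis
    by (simp add: bij_betw_iff_ex1)
qed

lemma fg_free_iff_lincomb_bij:
  "fg_free R P \<longleftrightarrow> left_module R P \<and>
    (\<exists>k b. inj_on b {..<k} \<and> (\<forall>j<k. b j \<in> carrier P) \<and>
       bij_betw (lincomb P b k) (carrier (std_free R k)) (carrier P))"
proof -
  note basis_iff = left_module.basis_unique_iff_lincomb_bij
  show ?thesis
  proof
    assume "fg_free R P"
    then obtain B where P: "left_module R P" and B: "finite B" "B \<subseteq> carrier P"
      and unique: "\<forall>x\<in>carrier P. \<exists>!c. c \<in> B \<rightarrow>\<^sub>E carrier R \<and> x = finsum P (\<lambda>\<beta>. c \<beta> \<odot>\<^bsub>P\<^esub> \<beta>) B"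
      unfolding fg_free_def by blast
    obtain b where "bij_betw b {..<card B} B"
      using ex_bij_betw_nat_finite[OF B(1)] by (auto simp: atLeast0LessThan)
    then have b: "inj_on b {..<card B}" "b ` {..<card B} = B"
      by (auto simp: bij_betw_def)
    then have "\<forall>j<card B. b j \<in> carrier P"
      using B(2) by auto
    moreover from this have "bij_betw (lincomb P b (card B)) (carrier (std_free R (card B))) (carrier P)"
      using basis_iff[OF P b(1)] unique b(2) by simp
    ultimately show "left_module R P \<and> (\<exists>k b. inj_on b {..<k} \<and> (\<forall>j<k. b j \<in> carrier P) \<and>
       bij_betw (lincomb P b k) (carrier (std_free R k)) (carrier P))"
      using P b(1) by blast
  next
    assume "left_module R P \<and> (\<exists>k b. inj_on b {..<k} \<and> (\<forall>j<k. b j \<in> carrier P) \<and>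
       bij_betw (lincomb P b k) (carrier (std_free R k)) (carrier P))"
    then obtain k b where P: "left_module R P" and b: "inj_on b {..<k}" "\<forall>j<k. b j \<in> carrier P"
      and bij: "bij_betw (lincomb P b k) (carrier (std_free R k)) (carrier P)"
      by blast
    have "\<forall>x\<in>carrier P. \<exists>!c. c \<in> b ` {..<k} \<rightarrow>\<^sub>E carrier R \<and> x = finsum P (\<lambda>\<beta>. c \<beta> \<odot>\<^bsub>P\<^esub> \<beta>) (b ` {..<k})"
      using basis_iff[OF P b] bij by simp
    then show "fg_free R P"
      unfolding fg_free_def using P b(2) by (intro conjI exI[of _ "b ` {..<k}"]) auto
  qed
qed

lemma (in ring) std_free_fg_free: "fg_free R (std_free R k)"
proof (cases "\<one> = \<zero>")
  case True
  then have zero: "carrier R = {\<zero>}"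
    using carrier_one_zero by simp
  have carrier_zero: "carrier (std_free R j) = {\<lambda>i. \<zero>}" for j
  proof (intro equalityI subsetI)
    fix x assume "x \<in> carrier (std_free R j)"
    then have "x i \<in> carrier R" for i
      by (rule std_free_coord)
    then show "x \<in> {\<lambda>i. \<zero>}"
      by (simp add: zero fun_eq_iff)
  qed (simp add: std_free_carrier)
  interpret V: left_module R "std_free R k" by (rule left_module_std_free)
  have "bij_betw (lincomb (std_free R k) (\<lambda>j. \<zero>\<^bsub>std_free R k\<^esub>) 0) (carrier (std_free R 0)) (carrier (std_free R k))"
    by (simp add: bij_betw_def lincomb_def carrier_zero)
  then show ?thesis
    unfolding fg_free_iff_lincomb_bij using left_module_std_free by (intro conjI exI) auto
next
  case False
  have "inj_on (unit_vec R) {..<k}"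
  proof (rule inj_onI)
    fix i j assume "unit_vec R i = unit_vec R j"
    then have "unit_vec R i i = unit_vec R j i"
      by simp
    then show "i = j"
      using False by (simp add: unit_vec_def split: if_splits)
  qed
  moreover have "bij_betw (lincomb (std_free R k) (unit_vec R) k) (carrier (std_free R k)) (carrier (std_free R k))"
    using bij_betw_cong[of "carrier (std_free R k)" "lincomb (std_free R k) (unit_vec R) k" id]
    by (simp add: lincomb_unit_vec)
  ultimately show ?thesis
    unfolding fg_free_iff_lincomb_bij using left_module_std_free unit_vec_closed by blast
qed

section \<open>Resolutions\<close>

definition resolution ::
  "nat \<Rightarrow> ('a, 'c) ring_scheme \<Rightarrow> ('a, 'b) module \<Rightarrow> (nat \<Rightarrow> ('a, 'p) module) \<Rightarrow>
   ('p \<Rightarrow> 'b) \<Rightarrow> (nat \<Rightarrow> 'p \<Rightarrow> 'p) \<Rightarrow> bool" where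
  "resolution n R M P d0 d \<longleftrightarrow>
     d0 \<in> lmod_hom R (P 0) M \<and> d0 ` carrier (P 0) = carrier M \<and>
     (\<forall>i\<in>{1..n}. d i \<in> lmod_hom R (P i) (P (i - 1))) \<and>
     (n \<ge> 1 \<longrightarrow> d 1 ` carrier (P 1) = mod_kernel (P 0) M d0) \<and>
     (\<forall>i. 1 \<le> i \<and> i < n \<longrightarrow> d (Suc i) ` carrier (P (Suc i)) = mod_kernel (P i) (P (i - 1)) (d i))"

lemma FP_iff_resolution:
  "FP n R M \<longleftrightarrow> left_module R M \<and>
    (\<exists>(P :: nat \<Rightarrow> ('a, nat \<Rightarrow> 'a) module) d0 d. (\<forall>i\<le>n. fg_free R (P i)) \<and> resolution n R M P d0 d)"
  unfolding FP_def resolution_def by blast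

lemma resolution_0_iff:
  "resolution 0 R M P d0 d \<longleftrightarrow> d0 \<in> lmod_hom R (P 0) M \<and> d0 ` carrier (P 0) = carrier M"
  by (simp add: resolution_def)

lemma ball_atLeastAtMost_Suc: "(\<forall>i\<in>{1..Suc m}. Q i) \<longleftrightarrow> Q 1 \<and> (\<forall>i\<in>{1..m}. Q (Suc i))"
proof -
  have "i \<in> {1..Suc m} \<longleftrightarrow> i = 1 \<or> (i - 1 \<in> {1..m} \<and> i = Suc (i - 1))" for i
    by auto
  then show ?thesis
    by (metis diff_Suc_1)
qed

lemma all_less_Suc_shift:
  "(\<forall>i. 1 \<le> i \<and> i < Suc m \<longrightarrow> Q i) \<longleftrightarrow> (1 \<le> m \<longrightarrow> Q 1) \<and> (\<forall>i. 1 \<le> i \<and> i < m \<longrightarrow> Q (Suc i))"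
proof -
  have "1 \<le> i \<and> i < Suc m \<longleftrightarrow> (i = 1 \<and> 1 \<le> m) \<or> (1 \<le> i - 1 \<and> i - 1 < m \<and> i = Suc (i - 1))" for i
    by auto
  then show ?thesis
    by (metis One_nat_def Suc_less_eq Suc_le_mono diff_Suc_1 le_numeral_extra(4))
qed

lemma resolution_Suc_iff:
  "resolution (Suc m) R M P d0 d \<longleftrightarrow>
     d0 \<in> lmod_hom R (P 0) M \<and> d0 ` carrier (P 0) = carrier M \<and>
     resolution m R ((P 0)\<lparr>carrier := mod_kernel (P 0) M d0\<rparr>) (\<lambda>i. P (Suc i)) (d 1) (\<lambda>i. d (Suc i))"
proof -
  have sub: "mod_kernel (P 0) M d0 \<subseteq> carrier (P 0)"
    by (auto simp: mod_kernel_def)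
  have homs: "(\<forall>i\<in>{1..m}. d (Suc i) \<in> lmod_hom R (P (Suc i)) (P (Suc (i - 1)))) \<longleftrightarrow>
      (\<forall>i\<in>{1..m}. d (Suc i) \<in> lmod_hom R (P (Suc i)) (P i))"
    by (intro ball_cong) auto
  have exact: "(\<forall>i. 1 \<le> i \<and> i < m \<longrightarrow> d (Suc (Suc i)) ` carrier (P (Suc (Suc i))) =
        mod_kernel (P (Suc i)) (P (Suc (i - 1))) (d (Suc i))) \<longleftrightarrow>
      (\<forall>i. 1 \<le> i \<and> i < m \<longrightarrow> d (Suc (Suc i)) ` carrier (P (Suc (Suc i))) =
        mod_kernel (P (Suc i)) (P i) (d (Suc i)))"
    by (intro all_cong) auto
  show ?thesis
    unfolding resolution_def ball_atLeastAtMost_Suc all_less_Suc_shift homs exact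
    by (auto simp: lmod_hom_submodule_iff[OF sub])
qed

lemma resolution_augmentation:
  "resolution n R M P d0 d \<Longrightarrow> d0 \<in> lmod_hom R (P 0) M \<and> d0 ` carrier (P 0) = carrier M"
  by (simp add: resolution_def)

lemma resolution_cong_differentials:
  "(\<And>i. 0 < i \<Longrightarrow> d' i = d i) \<Longrightarrow> resolution n R M P d0 d' \<longleftrightarrow> resolution n R M P d0 d"
  by (simp add: resolution_def)

lemma resolution_SucI:
  assumes "d0 \<in> lmod_hom R P0 M" "d0 ` carrier P0 = carrier M"
    and "resolution m R (P0\<lparr>carrier := mod_kernel P0 M d0\<rparr>) P d1 d"
  shows "resolution (Suc m) R M (\<lambda>i. if i = 0 then P0 else P (i - 1)) d0 (\<lambda>i. if i = 1 then d1 else d (i - 1))"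
proof -
  have shift: "(\<lambda>i. if Suc i = 1 then d1 else d (Suc i - 1)) = (\<lambda>i. if i = 0 then d1 else d i)"
    by (simp add: fun_eq_iff)
  have "resolution m R (P0\<lparr>carrier := mod_kernel P0 M d0\<rparr>) P d1 (\<lambda>i. if i = 0 then d1 else d i)"
    using assms(3) by (subst resolution_cong_differentials) auto
  with assms(1,2) show ?thesis
    unfolding resolution_Suc_iff shift by simp
qed

definition lmod_iso ::
  "('a, 'c) ring_scheme \<Rightarrow> ('a, 'b) module \<Rightarrow> ('a, 'e) module \<Rightarrow> ('b \<Rightarrow> 'e) \<Rightarrow> ('e \<Rightarrow> 'b) \<Rightarrow> bool" where
  "lmod_iso R A B \<phi> \<psi> \<longleftrightarrow> \<phi> \<in> lmod_hom R A B \<and> \<psi> \<in> lmod_hom R B A \<and>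
     (\<forall>x\<in>carrier A. \<psi> (\<phi> x) = x) \<and> (\<forall>y\<in>carrier B. \<phi> (\<psi> y) = y)"

lemma lmod_isoI_inverse:
  assumes "\<phi> \<in> lmod_hom R A B" "\<psi> \<in> carrier B \<rightarrow> carrier A"
    and "\<And>x. x \<in> carrier A \<Longrightarrow> \<psi> (\<phi> x) = x" "\<And>y. y \<in> carrier B \<Longrightarrow> \<phi> (\<psi> y) = y"
    and "left_module R A"
  shows "lmod_iso R A B \<phi> \<psi>"
proof -
  interpret A: left_module R A by fact
  note \<phi> = lmod_homD[OF assms(1)] and \<psi> = funcset_mem[OF assms(2)]
  have "\<psi> \<in> lmod_hom R B A"
  proof (rule lmod_homI)
    fix y1 y2 assume "y1 \<in> carrier B" "y2 \<in> carrier B"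
    then show "\<psi> (y1 \<oplus>\<^bsub>B\<^esub> y2) = \<psi> y1 \<oplus>\<^bsub>A\<^esub> \<psi> y2"
      using \<phi> \<psi> assms(3,4) by (metis A.M.add.m_closed)
  next
    fix a y assume "a \<in> carrier R" "y \<in> carrier B"
    then show "\<psi> (a \<odot>\<^bsub>B\<^esub> y) = a \<odot>\<^bsub>A\<^esub> \<psi> y"
      using \<phi> \<psi> assms(3,4) by (metis A.smult_closed)
  qed (rule \<psi>)
  with assms show ?thesis
    by (simp add: lmod_iso_def)
qed

lemma fg_free_iso_std_free:
  assumes "fg_free R P"
  obtains k \<phi> \<psi> where "lmod_iso R (std_free R k) P \<phi> \<psi>"
proof -
  from assms obtain k b where P: "left_module R P" and b: "\<forall>j<k. b j \<in> carrier P"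
    and bij: "bij_betw (lincomb P b k) (carrier (std_free R k)) (carrier P)"
    unfolding fg_free_iff_lincomb_bij by blast
  interpret P: left_module R P by fact
  have "lmod_iso R (std_free R k) P (lincomb P b k) (the_inv_into (carrier (std_free R k)) (lincomb P b k))"
    using bij P.lincomb_lmod_hom[OF b] P.R.left_module_std_free
    by (intro lmod_isoI_inverse)
       (auto simp: bij_betw_def the_inv_into_f_f f_the_inv_into_f the_inv_into_into)
  then show ?thesis ..
qed

lemma lmod_iso_kernel_image:
  assumes "lmod_iso R A B \<phi> \<psi>"
  shows "\<psi> ` mod_kernel B N h = mod_kernel A N (\<lambda>x. h (\<phi> x))"
proof -
  have "\<phi> \<in> carrier A \<rightarrow> carrier B" "\<psi> \<in> carrier B \<rightarrow> carrier A"
    "\<forall>x\<in>carrier A. \<psi> (\<phi> x) = x" "\<forall>y\<in>carrier B. \<phi> (\<psi> y) = y"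
    using assms by (auto simp: lmod_iso_def lmod_hom_def)
  then show ?thesis
    unfolding mod_kernel_def by (auto simp: image_iff Pi_iff) (metis)
qed

lemma lmod_iso_image: "lmod_iso R A B \<phi> \<psi> \<Longrightarrow> \<phi> ` carrier A = carrier B"
  unfolding lmod_iso_def lmod_hom_def by (auto simp: Pi_iff image_iff) metis

lemma lmod_iso_kernel_comp:
  assumes "lmod_iso R A B \<phi> \<psi>" "left_module R A" "left_module R B" "f \<in> carrier C \<rightarrow> carrier B"
  shows "mod_kernel C A (\<lambda>x. \<psi> (f x)) = mod_kernel C B f"
proof -
  interpret A: left_module R A by fact
  interpret B: left_module R B by fact
  have "\<psi> \<in> lmod_hom R B A" "\<forall>y\<in>carrier B. \<phi> (\<psi> y) = y"
    using assms(1) by (auto simp: lmod_iso_def)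
  moreover from this have "\<psi> \<zero>\<^bsub>B\<^esub> = \<zero>\<^bsub>A\<^esub>"
    using abelian_group_hom.hom_zero lmod_hom_abelian_group_hom
      A.abelian_group_axioms B.abelian_group_axioms by blast
  ultimately show ?thesis
    using assms(4) unfolding mod_kernel_def by (metis B.zero_closed Pi_iff)
qed

lemma lmod_iso_conj_image:
  assumes "lmod_iso R A B \<phi> \<psi>" "lmod_iso R A' B' \<phi>' \<psi>'" "d ` carrier B = mod_kernel B' N h"
  shows "(\<lambda>x. \<psi>' (d (\<phi> x))) ` carrier A = mod_kernel A' N (\<lambda>x. h (\<phi>' x))"
proof -
  have "(\<lambda>x. \<psi>' (d (\<phi> x))) ` carrier A = \<psi>' ` d ` \<phi> ` carrier A"
    by (simp add: image_image)
  also have "\<dots> = mod_kernel A' N (\<lambda>x. h (\<phi>' x))"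
    using assms by (simp add: lmod_iso_image lmod_iso_kernel_image)
  finally show ?thesis .
qed

lemma resolution_transport:
  assumes res: "resolution n R M P d0 d"
    and iso: "\<And>i. i \<le> n \<Longrightarrow> lmod_iso R (Q i) (P i) (\<phi> i) (\<psi> i)"
    and mods: "\<And>i. i \<le> n \<Longrightarrow> left_module R (Q i)" "\<And>i. i \<le> n \<Longrightarrow> left_module R (P i)"
  shows "resolution n R M Q (\<lambda>x. d0 (\<phi> 0 x)) (\<lambda>i x. \<psi> (i - 1) (d i (\<phi> i x)))"
proof -
  let ?D = "\<lambda>i x. \<psi> (i - 1) (d i (\<phi> i x))"
  have \<phi>: "\<phi> i \<in> lmod_hom R (Q i) (P i)" and \<psi>: "\<psi> i \<in> lmod_hom R (P i) (Q i)" if "i \<le> n" for i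
    using iso[OF that] by (auto simp: lmod_iso_def)
  from res have d0: "d0 \<in> lmod_hom R (P 0) M" "d0 ` carrier (P 0) = carrier M"
    and d: "\<And>i. i \<in> {1..n} \<Longrightarrow> d i \<in> lmod_hom R (P i) (P (i - 1))"
    and exact1: "1 \<le> n \<Longrightarrow> d 1 ` carrier (P 1) = mod_kernel (P 0) M d0"
    and exact: "\<And>i. 1 \<le> i \<Longrightarrow> i < n \<Longrightarrow>
      d (Suc i) ` carrier (P (Suc i)) = mod_kernel (P i) (P (i - 1)) (d i)"
    unfolding resolution_def by auto
  show ?thesis
    unfolding resolution_def
  proof (intro conjI ballI allI impI)
    show "(\<lambda>x. d0 (\<phi> 0 x)) \<in> lmod_hom R (Q 0) M"
      using lmod_hom_comp[OF \<phi> d0(1)] by simp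
    show "(\<lambda>x. d0 (\<phi> 0 x)) ` carrier (Q 0) = carrier M"
      using lmod_iso_image[OF iso] d0(2) by (simp flip: image_image)
  next
    fix i assume i: "i \<in> {1..n}"
    then have "i \<le> n" "i - 1 \<le> n"
      by auto
    with i show "?D i \<in> lmod_hom R (Q i) (Q (i - 1))"
      by (intro lmod_hom_comp[OF lmod_hom_comp[OF \<phi> d] \<psi>])
  next
    assume n: "1 \<le> n"
    then show "?D 1 ` carrier (Q 1) = mod_kernel (Q 0) M (\<lambda>x. d0 (\<phi> 0 x))"
      using lmod_iso_conj_image[OF iso iso exact1] by simp
  next
    fix i assume i: "1 \<le> i \<and> i < n"
    then have i': "i - 1 \<le> n" "i \<in> {1..n}" "Suc i \<le> n"
      by auto
    have "?D (Suc i) ` carrier (Q (Suc i)) = mod_kernel (Q i) (P (i - 1)) (\<lambda>x. d i (\<phi> i x))"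
      using lmod_iso_conj_image[OF iso[OF i'(3)] iso exact] i by simp
    also have "\<dots> = mod_kernel (Q i) (Q (i - 1)) (?D i)"
      using lmod_hom_closed[OF d[OF i'(2)] lmod_hom_closed[OF \<phi>]] i
      by (intro lmod_iso_kernel_comp[OF iso mods, symmetric, OF i'(1) i'(1) i'(1)]) auto
    finally show "?D (Suc i) ` carrier (Q (Suc i)) = mod_kernel (Q i) (Q (i - 1)) (?D i)" .
  qed
qed

lemma FP_std_resolution:
  assumes "FP n R M"
  obtains k D0 D where "resolution n R M (\<lambda>i. std_free R (k i)) D0 D"
proof -
  from assms obtain P :: "nat \<Rightarrow> ('a, nat \<Rightarrow> 'a) module" and d0 d
    where M: "left_module R M" and P: "\<And>i. i \<le> n \<Longrightarrow> fg_free R (P i)" and res: "resolution n R M P d0 d"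
    unfolding FP_iff_resolution by blast
  interpret M: left_module R M by fact
  have "\<forall>i. \<exists>k \<phi> \<psi>. i \<le> n \<longrightarrow> lmod_iso R (std_free R k) (P i) \<phi> \<psi>"
    using fg_free_iso_std_free P by metis
  then obtain k \<phi> \<psi> where iso: "\<And>i. i \<le> n \<Longrightarrow> lmod_iso R (std_free R (k i)) (P i) (\<phi> i) (\<psi> i)"
    by metis
  have "resolution n R M (\<lambda>i. std_free R (k i)) (\<lambda>x. d0 (\<phi> 0 x)) (\<lambda>i x. \<psi> (i - 1) (d i (\<phi> i x)))"
    using P by (intro resolution_transport[OF res iso]) (auto simp: fg_free_def M.R.left_module_std_free)
  then show ?thesis ..
qed

section \<open>Block decomposition of \<open>R\<^sup>K\<^sup>+\<^sup>J\<close>\<close>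

definition stack :: "nat \<Rightarrow> (nat \<Rightarrow> 'a) \<Rightarrow> (nat \<Rightarrow> 'a) \<Rightarrow> nat \<Rightarrow> 'a" where
  "stack K t s = (\<lambda>i. if i < K then t i else s (i - K))"

definition stack_fst :: "('a, 'c) ring_scheme \<Rightarrow> nat \<Rightarrow> (nat \<Rightarrow> 'a) \<Rightarrow> nat \<Rightarrow> 'a" where
  "stack_fst R K x = (\<lambda>i. if i < K then x i else \<zero>\<^bsub>R\<^esub>)"

definition stack_snd :: "nat \<Rightarrow> (nat \<Rightarrow> 'a) \<Rightarrow> nat \<Rightarrow> 'a" where
  "stack_snd K x = (\<lambda>i. x (K + i))"

lemma stack_snd_stack [simp]: "stack_snd K (stack K t s) = s"
  by (simp add: stack_def stack_snd_def)

lemma stack_fst_stack [simp]: "t \<in> carrier (std_free R K) \<Longrightarrow> stack_fst R K (stack K t s) = t"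
  by (auto simp: stack_def stack_fst_def std_free_carrier fun_eq_iff)

lemma stack_zero: "stack K (\<lambda>i. \<zero>\<^bsub>R\<^esub>) (\<lambda>i. \<zero>\<^bsub>R\<^esub>) = (\<lambda>i. \<zero>\<^bsub>R\<^esub>)"
  by (simp add: stack_def)

lemma stack_zero_right: "t \<in> carrier (std_free R K) \<Longrightarrow> stack K t (\<lambda>i. \<zero>\<^bsub>R\<^esub>) = t"
  by (auto simp: stack_def std_free_carrier fun_eq_iff)

lemma stack_eq_iff:
  assumes "t \<in> carrier (std_free R K)" "t' \<in> carrier (std_free R K)"
  shows "stack K t s = stack K t' s' \<longleftrightarrow> t = t' \<and> s = s'"
  by (metis assms stack_fst_stack stack_snd_stack)

context ring
begin

lemma stack_closed:
  "t \<in> carrier (std_free R K) \<Longrightarrow> s \<in> carrier (std_free R J) \<Longrightarrow> stack K t s \<in> carrier (std_free R (K + J))"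
  by (auto simp: stack_def std_free_carrier)

lemma stack_fst_closed: "x \<in> carrier (std_free R k) \<Longrightarrow> stack_fst R K x \<in> carrier (std_free R K)"
  using std_free_coord[of x k] by (simp add: stack_fst_def std_free_carrier)

lemma stack_snd_closed: "x \<in> carrier (std_free R (K + J)) \<Longrightarrow> stack_snd K x \<in> carrier (std_free R J)"
  by (simp add: stack_snd_def std_free_carrier)

lemma stack_split: "x \<in> carrier (std_free R (K + J)) \<Longrightarrow> stack K (stack_fst R K x) (stack_snd K x) = x"
  by (auto simp: stack_def stack_fst_def stack_snd_def)

lemma stack_cases:
  assumes "x \<in> carrier (std_free R (K + J))"
  obtains t s where "t \<in> carrier (std_free R K)" "s \<in> carrier (std_free R J)" "x = stack K t s"
  using assms stack_split stack_fst_closed stack_snd_closed by metis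

lemma stack_lmod_hom:
  assumes "f \<in> lmod_hom R A (std_free R K)" "g \<in> lmod_hom R A (std_free R J)"
  shows "(\<lambda>x. stack K (f x) (g x)) \<in> lmod_hom R A (std_free R (K + J))"
proof (rule lmod_homI)
  note f = lmod_homD[OF assms(1)] and g = lmod_homD[OF assms(2)]
  show "stack K (f x) (g x) \<in> carrier (std_free R (K + J))" if "x \<in> carrier A" for x
    using that by (intro stack_closed f g)
  show "stack K (f (x \<oplus>\<^bsub>A\<^esub> y)) (g (x \<oplus>\<^bsub>A\<^esub> y)) =
      stack K (f x) (g x) \<oplus>\<^bsub>std_free R (K + J)\<^esub> stack K (f y) (g y)"
    if "x \<in> carrier A" "y \<in> carrier A" for x y
    using that by (simp add: f g stack_def fun_eq_iff)
  show "stack K (f (a \<odot>\<^bsub>A\<^esub> x)) (g (a \<odot>\<^bsub>A\<^esub> x)) = a \<odot>\<^bsub>std_free R (K + J)\<^esub> stack K (f x) (g x)"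
    if "a \<in> carrier R" "x \<in> carrier A" for a x
    using that by (simp add: f g stack_def fun_eq_iff)
qed

lemma stack_fst_lmod_hom: "stack_fst R K \<in> lmod_hom R (std_free R k) (std_free R K)"
  by (intro lmod_homI stack_fst_closed) (auto simp: stack_fst_def)

lemma stack_snd_lmod_hom: "stack_snd K \<in> lmod_hom R (std_free R (K + J)) (std_free R J)"
  by (intro lmod_homI stack_snd_closed) (auto simp: stack_snd_def)

end

definition copair ::
  "('a, 'c) ring_scheme \<Rightarrow> ('b, 'd) ring_scheme \<Rightarrow> nat \<Rightarrow> ((nat \<Rightarrow> 'a) \<Rightarrow> 'b) \<Rightarrow>
   ((nat \<Rightarrow> 'a) \<Rightarrow> 'b) \<Rightarrow> (nat \<Rightarrow> 'a) \<Rightarrow> 'b" where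
  "copair R N K f g x = f (stack_fst R K x) \<oplus>\<^bsub>N\<^esub> g (stack_snd K x)"

lemma copair_stack [simp]:
  "t \<in> carrier (std_free R K) \<Longrightarrow> copair R N K f g (stack K t s) = f t \<oplus>\<^bsub>N\<^esub> g s"
  by (simp add: copair_def)

lemma (in left_module) copair_lmod_hom:
  assumes "f \<in> lmod_hom R (std_free R K) M" "g \<in> lmod_hom R (std_free R J) M"
  shows "copair R M K f g \<in> lmod_hom R (std_free R (K + J)) M"
  unfolding copair_def
  by (intro lmod_hom_add_pointwise lmod_hom_comp[OF R.stack_fst_lmod_hom assms(1)]
      lmod_hom_comp[OF R.stack_snd_lmod_hom assms(2)])

lemma (in left_module) copair_onto:
  assumes f: "f \<in> lmod_hom R (std_free R K) M" and g: "g \<in> lmod_hom R (std_free R J) M"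
    and onto: "f ` carrier (std_free R K) = carrier M"
  shows "copair R M K f g ` carrier (std_free R (K + J)) = carrier M"
proof (intro equalityI subsetI)
  fix x assume "x \<in> carrier M"
  then obtain t where t: "t \<in> carrier (std_free R K)" "x = f t"
    using onto by blast
  have "g \<zero>\<^bsub>std_free R J\<^esub> = \<zero>\<^bsub>M\<^esub>"
    using abelian_group_hom.hom_zero[OF lmod_hom_abelian_group_hom[OF _ _ g]]
      R.left_module_std_free M.abelian_group_axioms by (simp add: left_module_def)
  then have "copair R M K f g (stack K t \<zero>\<^bsub>std_free R J\<^esub>) = x"
    using t lmod_hom_closed[OF f] by simp
  moreover have "stack K t \<zero>\<^bsub>std_free R J\<^esub> \<in> carrier (std_free R (K + J))"
    using t by (intro R.stack_closed) (simp_all add: std_free_carrier)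
  ultimately show "x \<in> copair R M K f g ` carrier (std_free R (K + J))"
    by blast
qed (use lmod_hom_closed[OF copair_lmod_hom[OF f g]] in blast)

section \<open>The double retractive pair\<close>

definition double_plus :: "('a, 'c) ring_scheme \<Rightarrow> ('a \<Rightarrow> 's) \<Rightarrow> nat \<Rightarrow> (nat \<Rightarrow> 'a) \<Rightarrow> nat \<Rightarrow> 's" where
  "double_plus R \<rho> K x = (\<lambda>i. \<rho> (stack_fst R K x i \<oplus>\<^bsub>R\<^esub> stack_snd K x i))"

definition double_minus :: "('a, 'c) ring_scheme \<Rightarrow> ('s \<Rightarrow> 'a) \<Rightarrow> nat \<Rightarrow> (nat \<Rightarrow> 's) \<Rightarrow> nat \<Rightarrow> 'a" where
  "double_minus R \<iota> K y = stack K (\<lambda>i. \<zero>\<^bsub>R\<^esub>) (\<lambda>i. \<iota> (y i))"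

lemma double_plus_stack:
  "t \<in> carrier (std_free R K) \<Longrightarrow> double_plus R \<rho> K (stack K t s) = (\<lambda>i. \<rho> (t i \<oplus>\<^bsub>R\<^esub> s i))"
  by (simp add: double_plus_def)

lemma double_retractive_pair:
  assumes R: "ring R" and S: "ring S" and \<rho>: "\<rho> \<in> ring_hom R S" and \<iota>: "\<iota> \<in> ring_hom S R"
    and \<rho>\<iota>: "\<forall>s\<in>carrier S. \<rho> (\<iota> s) = s"
  shows "retractive_pair R S \<rho> \<iota> (std_free R (K + K)) (std_free S K) (double_plus R \<rho> K) (double_minus R \<iota> K)"
proof -
  interpret R: ring R by fact
  interpret S: ring S by fact
  interpret V: left_module R "std_free R K" by (rule R.left_module_std_free)
  have sum: "(\<lambda>x. stack_fst R K x \<oplus>\<^bsub>std_free R K\<^esub> stack_snd K x) \<in> lmod_hom R (std_free R (K + K)) (std_free R K)"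
    by (intro V.lmod_hom_add_pointwise R.stack_fst_lmod_hom R.stack_snd_lmod_hom)
  have plus: "double_plus R \<rho> K \<in> lmod_hom R (std_free R (K + K)) (restrict_scalars \<rho> (std_free S K))"
    unfolding double_plus_def using lmod_hom_comp[OF sum coeff_map_lmod_hom[OF R S \<rho>]] by simp
  have inr: "(\<lambda>z. stack K (\<lambda>i. \<zero>\<^bsub>R\<^esub>) z) \<in> lmod_hom R (std_free R K) (std_free R (K + K))"
    using R.stack_lmod_hom[OF V.zero_lmod_hom lmod_hom_id] by simp
  have minus: "double_minus R \<iota> K \<in> lmod_hom S (std_free S K) (restrict_scalars \<iota> (std_free R (K + K)))"
    unfolding double_minus_def
    by (rule lmod_hom_comp_restrict_scalars[OF coeff_map_lmod_hom[OF S R \<iota>] inr])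
       (use ring_hom_closed[OF \<iota>] in auto)
  have "double_plus R \<rho> K (double_minus R \<iota> K y) = y" if "y \<in> carrier (std_free S K)" for y
    using that S.std_free_coord[OF that] ring_hom_closed[OF \<iota>] \<rho>\<iota>
    by (simp add: double_minus_def double_plus_stack std_free_carrier)
  then show ?thesis
    unfolding retractive_pair_def
    using R.left_module_std_free S.left_module_std_free plus minus by blast
qed

lemma copair_rp_mapping:
  assumes R: "ring R" and S: "ring S" and \<rho>: "\<rho> \<in> ring_hom R S" and \<iota>: "\<iota> \<in> ring_hom S R"
    and rp: "retractive_pair R S \<rho> \<iota> M L ap am"
    and D0: "D0 \<in> lmod_hom R (std_free R K) M" and N: "N \<in> lmod_hom R (std_free R K) M"
    and \<delta>: "\<delta> \<in> lmod_hom S (std_free S K) L"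
    and ap_D0: "\<And>z. z \<in> carrier (std_free R K) \<Longrightarrow> ap (D0 z) = \<delta> (\<lambda>i. \<rho> (z i))"
    and ap_N: "\<And>z. z \<in> carrier (std_free R K) \<Longrightarrow> ap (N z) = \<delta> (\<lambda>i. \<rho> (z i))"
    and am_\<delta>: "\<And>y. y \<in> carrier (std_free S K) \<Longrightarrow> am (\<delta> y) = N (\<lambda>i. \<iota> (y i))"
  shows "rp_mapping R S (std_free R (K + K)) (std_free S K) (double_plus R \<rho> K) (double_minus R \<iota> K)
           M L ap am (copair R M K D0 N) \<delta>"
proof -
  interpret R: ring R by fact
  interpret S: ring S by fact
  from rp have M: "left_module R M" and L: "left_module S L"
    and aph: "ap \<in> lmod_hom R M (restrict_scalars \<rho> L)"
    unfolding retractive_pair_def by auto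
  interpret M: left_module R M by fact
  interpret L: left_module S L by fact
  interpret ap: abelian_group_hom M L ap
    using semilinear_abelian_group_hom[OF _ _ aph] M.abelian_group_axioms L.abelian_group_axioms by blast
  interpret \<delta>: abelian_group_hom "std_free S K" L \<delta>
    using lmod_hom_abelian_group_hom[OF _ _ \<delta>] S.left_module_std_free L.abelian_group_axioms
    by (simp add: left_module_def)
  interpret N: abelian_group_hom "std_free R K" M N
    using lmod_hom_abelian_group_hom[OF _ _ N] R.left_module_std_free M.abelian_group_axioms
    by (simp add: left_module_def)
  have \<rho>z: "(\<lambda>i. \<rho> (z i)) \<in> carrier (std_free S K)" if "z \<in> carrier (std_free R K)" for z
    using lmod_hom_closed[OF coeff_map_lmod_hom[OF R S \<rho>] that] by simp
  have plus: "ap (copair R M K D0 N x) = \<delta> (double_plus R \<rho> K x)" if x: "x \<in> carrier (std_free R (K + K))" for x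
  proof -
    obtain t s where ts: "t \<in> carrier (std_free R K)" "s \<in> carrier (std_free R K)" "x = stack K t s"
      using R.stack_cases[OF x] .
    have "ap (copair R M K D0 N x) = \<delta> (\<lambda>i. \<rho> (t i)) \<oplus>\<^bsub>L\<^esub> \<delta> (\<lambda>i. \<rho> (s i))"
      using ts by (simp add: lmod_hom_closed[OF D0] ap_D0 ap_N)
    also have "\<dots> = \<delta> (double_plus R \<rho> K x)"
      using ts \<rho>z R.std_free_coord by (simp add: double_plus_stack ring_hom_add[OF \<rho>] flip: \<delta>.hom_add)
    finally show ?thesis .
  qed
  have minus: "copair R M K D0 N (double_minus R \<iota> K y) = am (\<delta> y)" if "y \<in> carrier (std_free S K)" for y
  proof -
    have "(\<lambda>i. \<zero>\<^bsub>R\<^esub>) \<in> carrier (std_free R K)"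
      by (simp add: std_free_carrier)
    moreover have "D0 (\<lambda>i. \<zero>\<^bsub>R\<^esub>) = \<zero>\<^bsub>M\<^esub>"
      using abelian_group_hom.hom_zero[OF lmod_hom_abelian_group_hom[OF _ _ D0]]
        R.left_module_std_free M.abelian_group_axioms by (simp add: left_module_def)
    moreover have \<iota>y: "(\<lambda>i. \<iota> (y i)) \<in> carrier (std_free R K)"
      using lmod_hom_closed[OF coeff_map_lmod_hom[OF S R \<iota>] that] by simp
    ultimately show ?thesis
      by (simp add: double_minus_def am_\<delta>[OF that] lmod_hom_closed[OF N \<iota>y])
  qed
  show ?thesis
    unfolding rp_mapping_def
    using M.copair_lmod_hom[OF D0 N] \<delta> plus minus by blast
qed

lemma retractive_pair_lift_basis:
  fixes M :: "('a, 'm) module" and L :: "('s, 'l) module"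
  assumes R: "ring R" and S: "ring S" and \<rho>: "\<rho> \<in> ring_hom R S" and \<iota>: "\<iota> \<in> ring_hom S R"
    and rp: "retractive_pair R S \<rho> \<iota> M L ap am"
    and D0: "D0 \<in> lmod_hom R (std_free R K) M"
  obtains N \<delta> where "N \<in> lmod_hom R (std_free R K) M" "\<delta> \<in> lmod_hom S (std_free S K) L"
    "\<And>z. z \<in> carrier (std_free R K) \<Longrightarrow> ap (D0 z) = \<delta> (\<lambda>i. \<rho> (z i))"
    "\<And>z. z \<in> carrier (std_free R K) \<Longrightarrow> ap (N z) = \<delta> (\<lambda>i. \<rho> (z i))"
    "\<And>y. y \<in> carrier (std_free S K) \<Longrightarrow> am (\<delta> y) = N (\<lambda>i. \<iota> (y i))"
proof -
  interpret R: ring R by fact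
  interpret S: ring S by fact
  from rp have M: "left_module R M" and L: "left_module S L"
    and ap: "ap \<in> lmod_hom R M (restrict_scalars \<rho> L)" and am: "am \<in> lmod_hom S L (restrict_scalars \<iota> M)"
    and ap_am: "\<forall>y\<in>carrier L. ap (am y) = y"
    unfolding retractive_pair_def by auto
  interpret M: left_module R M by fact
  interpret L: left_module S L by fact
  define w where "w j = D0 (unit_vec R j)" for j
  have w: "\<forall>j<K. w j \<in> carrier M" and ap_w: "\<forall>j<K. ap (w j) \<in> carrier L"
    using lmod_hom_closed[OF D0 R.unit_vec_closed] lmod_hom_closed[OF ap] by (simp_all add: w_def)
  have am_ap_w: "\<forall>j<K. am (ap (w j)) \<in> carrier M"
    using ap_w lmod_hom_closed[OF am] by simp
  show ?thesis
  proof
    show "lincomb M (\<lambda>j. am (ap (w j))) K \<in> lmod_hom R (std_free R K) M"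
      by (rule M.lincomb_lmod_hom[OF am_ap_w])
    show "lincomb L (\<lambda>j. ap (w j)) K \<in> lmod_hom S (std_free S K) L"
      by (rule L.lincomb_lmod_hom[OF ap_w])
  next
    fix z assume z: "z \<in> carrier (std_free R K)"
    have \<rho>z: "(\<lambda>i. \<rho> (z i)) \<in> carrier (std_free S K)"
      using lmod_hom_closed[OF coeff_map_lmod_hom[OF R S \<rho>] z] by simp
    show "ap (D0 z) = lincomb L (\<lambda>j. ap (w j)) K (\<lambda>i. \<rho> (z i))"
      using lmod_hom_eq_lincomb[OF M D0 z] lincomb_semilinear[OF M L ap w z] by (simp add: w_def)
    have "ap (lincomb M (\<lambda>j. am (ap (w j))) K z) = lincomb L (\<lambda>j. ap (am (ap (w j)))) K (\<lambda>i. \<rho> (z i))"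
      by (rule lincomb_semilinear[OF M L ap am_ap_w z])
    also have "\<dots> = lincomb L (\<lambda>j. ap (w j)) K (\<lambda>i. \<rho> (z i))"
      using ap_w ap_am \<rho>z by (intro L.lincomb_cong) auto
    finally show "ap (lincomb M (\<lambda>j. am (ap (w j))) K z) = lincomb L (\<lambda>j. ap (w j)) K (\<lambda>i. \<rho> (z i))" .
  next
    fix y assume "y \<in> carrier (std_free S K)"
    then show "am (lincomb L (\<lambda>j. ap (w j)) K y) = lincomb M (\<lambda>j. am (ap (w j))) K (\<lambda>i. \<iota> (y i))"
      by (rule lincomb_semilinear[OF L M am ap_w])
  qed
qed

lemma retractive_pair_lift_onto:
  assumes R: "ring R" and S: "ring S" and \<rho>: "\<rho> \<in> ring_hom R S"
    and rp: "retractive_pair R S \<rho> \<iota> M L ap am"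
    and onto: "D0 ` carrier (std_free R K) = carrier M" and \<delta>: "\<delta> \<in> lmod_hom S (std_free S K) L"
    and ap_D0: "\<And>z. z \<in> carrier (std_free R K) \<Longrightarrow> ap (D0 z) = \<delta> (\<lambda>i. \<rho> (z i))"
  shows "\<delta> ` carrier (std_free S K) = carrier L"
proof (intro equalityI subsetI)
  fix y assume y: "y \<in> carrier L"
  from rp have am: "am \<in> lmod_hom S L (restrict_scalars \<iota> M)" and ap_am: "\<forall>y\<in>carrier L. ap (am y) = y"
    unfolding retractive_pair_def by auto
  obtain z where z: "z \<in> carrier (std_free R K)" "am y = D0 z"
    using onto lmod_hom_closed[OF am y] by (metis imageE restrict_scalars_simps(1))
  then have "y = \<delta> (\<lambda>i. \<rho> (z i))"
    using ap_am ap_D0 y by metis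
  moreover have "(\<lambda>i. \<rho> (z i)) \<in> carrier (std_free S K)"
    using lmod_hom_closed[OF coeff_map_lmod_hom[OF R S \<rho>] z(1)] by simp
  ultimately show "y \<in> \<delta> ` carrier (std_free S K)"
    by blast
qed (use lmod_hom_closed[OF \<delta>] in blast)

section \<open>Kernels of copairings\<close>

definition copair_kernel_map ::
  "('a, 'c) ring_scheme \<Rightarrow> nat \<Rightarrow> nat \<Rightarrow> ((nat \<Rightarrow> 'a) \<Rightarrow> nat \<Rightarrow> 'a) \<Rightarrow> ((nat \<Rightarrow> 'a) \<Rightarrow> nat \<Rightarrow> 'a) \<Rightarrow>
   (nat \<Rightarrow> 'a) \<Rightarrow> nat \<Rightarrow> 'a" where
  "copair_kernel_map R K K' D1 \<sigma> y =
     stack K (D1 (stack_fst R K' y) \<oplus>\<^bsub>std_free R K\<^esub> \<ominus>\<^bsub>std_free R K\<^esub> \<sigma> (stack_snd K' y)) (stack_snd K' y)"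

lemma copair_kernel_map_stack:
  "t \<in> carrier (std_free R K') \<Longrightarrow>
    copair_kernel_map R K K' D1 \<sigma> (stack K' t s) = stack K (D1 t \<oplus>\<^bsub>std_free R K\<^esub> \<ominus>\<^bsub>std_free R K\<^esub> \<sigma> s) s"
  by (simp add: copair_kernel_map_def)

context
  fixes R :: "('a, 'c) ring_scheme" and M :: "('a, 'm) module"
    and K K' J :: nat and D0 N :: "(nat \<Rightarrow> 'a) \<Rightarrow> 'm" and D1 \<sigma> :: "(nat \<Rightarrow> 'a) \<Rightarrow> nat \<Rightarrow> 'a"
  assumes M: "left_module R M"
    and D0: "D0 \<in> lmod_hom R (std_free R K) M" and N: "N \<in> lmod_hom R (std_free R J) M"
    and D1: "D1 \<in> lmod_hom R (std_free R K') (std_free R K)"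
    and \<sigma>: "\<sigma> \<in> lmod_hom R (std_free R J) (std_free R K)"
    and D0_\<sigma>: "\<And>s. s \<in> carrier (std_free R J) \<Longrightarrow> D0 (\<sigma> s) = N s"
begin

interpretation M: left_module R M by (rule M)
interpretation V: left_module R "std_free R K" by (rule M.R.left_module_std_free)
interpretation D0: abelian_group_hom "std_free R K" M D0
  using lmod_hom_abelian_group_hom[OF _ _ D0] V.abelian_group_axioms M.abelian_group_axioms by blast
interpretation \<sigma>: abelian_group_hom "std_free R J" "std_free R K" \<sigma>
  using lmod_hom_abelian_group_hom[OF _ _ \<sigma>] M.R.left_module_std_free V.abelian_group_axioms
  by (simp add: left_module_def)

lemma copair_kernel_map_lmod_hom:
  "copair_kernel_map R K K' D1 \<sigma> \<in> lmod_hom R (std_free R (K' + J)) (std_free R (K + J))"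
  unfolding copair_kernel_map_def
  by (intro M.R.stack_lmod_hom V.lmod_hom_add_pointwise lmod_hom_comp[OF M.R.stack_fst_lmod_hom D1]
      lmod_hom_comp[OF lmod_hom_comp[OF M.R.stack_snd_lmod_hom \<sigma>] V.a_inv_lmod_hom] M.R.stack_snd_lmod_hom)

lemma copair_kernel_map_image:
  assumes exact: "D1 ` carrier (std_free R K') = mod_kernel (std_free R K) M D0"
  shows "copair_kernel_map R K K' D1 \<sigma> ` carrier (std_free R (K' + J)) =
    mod_kernel (std_free R (K + J)) M (copair R M K D0 N)"
proof (intro equalityI subsetI)
  fix x assume "x \<in> copair_kernel_map R K K' D1 \<sigma> ` carrier (std_free R (K' + J))"
  then obtain y where y: "y \<in> carrier (std_free R (K' + J))" and x: "x = copair_kernel_map R K K' D1 \<sigma> y"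
    by blast
  obtain t s where t: "t \<in> carrier (std_free R K')" and s: "s \<in> carrier (std_free R J)"
    and ts: "y = stack K' t s"
    using M.R.stack_cases[OF y] .
  have D1t: "D1 t \<in> carrier (std_free R K)" "D0 (D1 t) = \<zero>\<^bsub>M\<^esub>"
    using t exact by (auto simp: mod_kernel_def)
  have "copair R M K D0 N x = (\<zero>\<^bsub>M\<^esub> \<oplus>\<^bsub>M\<^esub> \<ominus>\<^bsub>M\<^esub> N s) \<oplus>\<^bsub>M\<^esub> N s"
    using D1t s by (simp add: x ts copair_kernel_map_stack[OF t] D0_\<sigma> del: std_free_simps)
  also have "\<dots> = \<zero>\<^bsub>M\<^esub>"
    using s lmod_hom_closed[OF N] by (simp add: M.l_neg)
  finally show "x \<in> mod_kernel (std_free R (K + J)) M (copair R M K D0 N)"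
    using lmod_hom_closed[OF copair_kernel_map_lmod_hom y] by (simp add: mod_kernel_def x)
next
  fix x assume "x \<in> mod_kernel (std_free R (K + J)) M (copair R M K D0 N)"
  then have x: "x \<in> carrier (std_free R (K + J))" and x0: "copair R M K D0 N x = \<zero>\<^bsub>M\<^esub>"
    by (auto simp: mod_kernel_def)
  obtain a b where a: "a \<in> carrier (std_free R K)" and b: "b \<in> carrier (std_free R J)"
    and ab: "x = stack K a b"
    using M.R.stack_cases[OF x] .
  have \<sigma>b: "\<sigma> b \<in> carrier (std_free R K)"
    using lmod_hom_closed[OF \<sigma> b] .
  have "copair R M K D0 N x = D0 a \<oplus>\<^bsub>M\<^esub> D0 (\<sigma> b)"
    using a b by (simp add: ab D0_\<sigma>)
  also have "\<dots> = D0 (a \<oplus>\<^bsub>std_free R K\<^esub> \<sigma> b)"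
    using a \<sigma>b by (rule D0.hom_add[symmetric])
  finally have "D0 (a \<oplus>\<^bsub>std_free R K\<^esub> \<sigma> b) = \<zero>\<^bsub>M\<^esub>"
    using x0 by simp
  then have "a \<oplus>\<^bsub>std_free R K\<^esub> \<sigma> b \<in> D1 ` carrier (std_free R K')"
    unfolding exact mod_kernel_def using a \<sigma>b V.a_closed by blast
  then obtain t where t: "t \<in> carrier (std_free R K')" "a \<oplus>\<^bsub>std_free R K\<^esub> \<sigma> b = D1 t"
    by (rule imageE) simp
  have "copair_kernel_map R K K' D1 \<sigma> (stack K' t b) = x"
    using a \<sigma>b by (simp add: ab copair_kernel_map_stack[OF t(1)] t(2)[symmetric] V.a_assoc V.r_neg del: std_free_simps)
  moreover have "stack K' t b \<in> carrier (std_free R (K' + J))"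
    using t(1) b by (rule M.R.stack_closed)
  ultimately show "x \<in> copair_kernel_map R K K' D1 \<sigma> ` carrier (std_free R (K' + J))"
    by blast
qed

lemma copair_kernel_map_kernel:
  "mod_kernel (std_free R (K' + J)) (std_free R (K + J)) (copair_kernel_map R K K' D1 \<sigma>) =
    mod_kernel (std_free R K') (std_free R K) D1"
proof (intro equalityI subsetI)
  fix y assume "y \<in> mod_kernel (std_free R (K' + J)) (std_free R (K + J)) (copair_kernel_map R K K' D1 \<sigma>)"
  then have y: "y \<in> carrier (std_free R (K' + J))"
    and y0: "copair_kernel_map R K K' D1 \<sigma> y = \<zero>\<^bsub>std_free R K\<^esub>"
    by (auto simp: mod_kernel_def)
  obtain t s where t: "t \<in> carrier (std_free R K')" and s: "s \<in> carrier (std_free R J)"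
    and ts: "y = stack K' t s"
    using M.R.stack_cases[OF y] .
  have D1t: "D1 t \<in> carrier (std_free R K)"
    using lmod_hom_closed[OF D1 t] .
  have "stack K (D1 t \<oplus>\<^bsub>std_free R K\<^esub> \<ominus>\<^bsub>std_free R K\<^esub> \<sigma> s) s = stack K \<zero>\<^bsub>std_free R K\<^esub> \<zero>\<^bsub>std_free R J\<^esub>"
    using y0 stack_zero[of K R] by (simp add: ts copair_kernel_map_stack[OF t])
  then have "D1 t \<oplus>\<^bsub>std_free R K\<^esub> \<ominus>\<^bsub>std_free R K\<^esub> \<sigma> s = \<zero>\<^bsub>std_free R K\<^esub> \<and>
      s = \<zero>\<^bsub>std_free R J\<^esub>"
    using stack_eq_iff[OF V.a_closed[OF D1t V.a_inv_closed[OF lmod_hom_closed[OF \<sigma> s]]] V.zero_closed]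
    by blast
  then have e: "D1 t \<oplus>\<^bsub>std_free R K\<^esub> \<ominus>\<^bsub>std_free R K\<^esub> \<sigma> s = \<zero>\<^bsub>std_free R K\<^esub>"
    and s0: "s = \<zero>\<^bsub>std_free R J\<^esub>"
    by auto
  have "D1 t = \<zero>\<^bsub>std_free R K\<^esub>"
    using e D1t by (simp add: s0 del: std_free_simps)
  moreover have "y = t"
    using t by (simp add: ts s0 stack_zero_right)
  ultimately show "y \<in> mod_kernel (std_free R K') (std_free R K) D1"
    using t by (simp add: mod_kernel_def)
next
  fix t assume "t \<in> mod_kernel (std_free R K') (std_free R K) D1"
  then have t: "t \<in> carrier (std_free R K')" and t0: "D1 t = \<zero>\<^bsub>std_free R K\<^esub>"
    by (auto simp: mod_kernel_def)
  have "copair_kernel_map R K K' D1 \<sigma> (stack K' t \<zero>\<^bsub>std_free R J\<^esub>) = stack K \<zero>\<^bsub>std_free R K\<^esub> \<zero>\<^bsub>std_free R J\<^esub>"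
    by (simp add: copair_kernel_map_stack[OF t] t0 del: std_free_simps)
  then have "copair_kernel_map R K K' D1 \<sigma> t = \<zero>\<^bsub>std_free R (K + J)\<^esub>"
    using t by (simp add: stack_zero_right stack_zero)
  moreover have "t \<in> carrier (std_free R (K' + J))"
    using t M.R.std_free_mono[of K' "K' + J"] by auto
  ultimately show "t \<in> mod_kernel (std_free R (K' + J)) (std_free R (K + J)) (copair_kernel_map R K K' D1 \<sigma>)"
    by (simp add: mod_kernel_def)
qed

end

lemma resolution_copair_kernel:
  fixes M :: "('a, 'm) module"
  assumes M: "left_module R M"
    and res: "resolution (Suc m) R M (\<lambda>i. std_free R (k i)) D0 D"
    and N: "N \<in> lmod_hom R (std_free R J) M" and \<sigma>: "\<sigma> \<in> lmod_hom R (std_free R J) (std_free R (k 0))"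
    and D0_\<sigma>: "\<And>s. s \<in> carrier (std_free R J) \<Longrightarrow> D0 (\<sigma> s) = N s"
  shows "resolution m R ((std_free R (k 0 + J))\<lparr>carrier := mod_kernel (std_free R (k 0 + J)) M (copair R M (k 0) D0 N)\<rparr>)
    (\<lambda>i. std_free R (if i = 0 then k 1 + J else k (Suc i))) (copair_kernel_map R (k 0) (k 1) (D 1) \<sigma>) (\<lambda>i. D (Suc i))"
proof -
  let ?kerC = "mod_kernel (std_free R (k 0 + J)) M (copair R M (k 0) D0 N)"
  let ?kerD = "mod_kernel (std_free R (k 0)) M D0"
  let ?E = "copair_kernel_map R (k 0) (k 1) (D 1) \<sigma>"
  from res have D0: "D0 \<in> lmod_hom R (std_free R (k 0)) M"
    and tail: "resolution m R ((std_free R (k 0))\<lparr>carrier := ?kerD\<rparr>) (\<lambda>i. std_free R (k (Suc i)))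
      (D 1) (\<lambda>i. D (Suc i))"
    unfolding resolution_Suc_iff by auto
  have sub: "?kerD \<subseteq> carrier (std_free R (k 0))" "?kerC \<subseteq> carrier (std_free R (k 0 + J))"
    by (auto simp: mod_kernel_def)
  from resolution_augmentation[OF tail]
  have D1: "D 1 \<in> lmod_hom R (std_free R (k 1)) (std_free R (k 0))"
    and exact: "D 1 ` carrier (std_free R (k 1)) = ?kerD"
    by (auto simp: lmod_hom_submodule_iff[OF sub(1)])
  note E0 = copair_kernel_map_lmod_hom[where K' = "k 1", OF M D0 N D1 \<sigma> D0_\<sigma>]
    copair_kernel_map_image[where K' = "k 1", OF M D0 N D1 \<sigma> D0_\<sigma> exact]
    copair_kernel_map_kernel[where K' = "k 1", OF M D0 N D1 \<sigma> D0_\<sigma>]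
  have E0_onto: "?E \<in> lmod_hom R (std_free R (k 1 + J)) ((std_free R (k 0 + J))\<lparr>carrier := ?kerC\<rparr>)"
    "?E ` carrier (std_free R (k 1 + J)) = ?kerC"
    using E0 by (auto simp: lmod_hom_submodule_iff[OF sub(2)])
  show ?thesis
  proof (cases m)
    case 0
    then show ?thesis
      using E0_onto by (simp add: resolution_0_iff)
  next
    case (Suc m')
    have "(std_free R (k 1 + J))\<lparr>carrier := mod_kernel (std_free R (k 1)) (std_free R (k 0)) (D 1)\<rparr> =
        (std_free R (k 1))\<lparr>carrier := mod_kernel (std_free R (k 1)) (std_free R (k 0)) (D 1)\<rparr>"
      by (rule std_free_update_carrier)
    with Suc show ?thesis
      using tail E0_onto E0(3) by (simp add: resolution_Suc_iff)
  qed
qed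

lemma FP_copair_kernel:
  fixes M :: "('a, 'm) module"
  assumes M: "left_module R M"
    and res: "resolution (Suc m) R M (\<lambda>i. std_free R (k i)) D0 D"
    and N: "N \<in> lmod_hom R (std_free R J) M"
  shows "FP m R ((std_free R (k 0 + J))\<lparr>carrier := mod_kernel (std_free R (k 0 + J)) M (copair R M (k 0) D0 N)\<rparr>)"
proof -
  interpret M: left_module R M by fact
  have D0: "D0 \<in> lmod_hom R (std_free R (k 0)) M" "D0 ` carrier (std_free R (k 0)) = carrier M"
    using resolution_augmentation[OF res] by auto
  obtain \<sigma> where \<sigma>: "\<sigma> \<in> lmod_hom R (std_free R J) (std_free R (k 0))"
    and D0_\<sigma>: "\<And>s. s \<in> carrier (std_free R J) \<Longrightarrow> D0 (\<sigma> s) = N s"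
    using std_free_lift[OF M.R.left_module_std_free M D0 N] by blast
  let ?P = "\<lambda>i. std_free R (if i = 0 then k 1 + J else k (Suc i))"
  have "resolution m R ((std_free R (k 0 + J))\<lparr>carrier := mod_kernel (std_free R (k 0 + J)) M (copair R M (k 0) D0 N)\<rparr>)
      ?P (copair_kernel_map R (k 0) (k 1) (D 1) \<sigma>) (\<lambda>i. D (Suc i))"
    by (rule resolution_copair_kernel[OF M res N \<sigma> D0_\<sigma>])
  moreover have "\<forall>i\<le>m. fg_free R (?P i)"
    using M.R.std_free_fg_free by blast
  moreover have "left_module R ((std_free R (k 0 + J))\<lparr>carrier := mod_kernel (std_free R (k 0 + J)) M (copair R M (k 0) D0 N)\<rparr>)"
    using left_module.left_module_kernel[OF M.R.left_module_std_free M M.copair_lmod_hom[OF D0(1) N]] .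
  ultimately show ?thesis
    unfolding FP_iff_resolution
    by (intro conjI exI[of _ ?P] exI[of _ "copair_kernel_map R (k 0) (k 1) (D 1) \<sigma>"] exI[of _ "\<lambda>i. D (Suc i)"])
qed

section \<open>Free covers of retractive pairs\<close>

lemma retractive_pair_kernel:
  assumes rpP: "retractive_pair R S \<rho> \<iota> P F bp bm"
    and rpM: "retractive_pair R S \<rho> \<iota> M L ap am"
    and map: "rp_mapping R S P F bp bm M L ap am \<phi> \<psi>"
  shows "retractive_pair R S \<rho> \<iota> (P\<lparr>carrier := mod_kernel P M \<phi>\<rparr>) (F\<lparr>carrier := mod_kernel F L \<psi>\<rparr>) bp bm"
proof -
  from rpP have P: "left_module R P" and F: "left_module S F"
    and bp: "bp \<in> lmod_hom R P (restrict_scalars \<rho> F)" and bm: "bm \<in> lmod_hom S F (restrict_scalars \<iota> P)"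
    and bp_bm: "\<forall>y\<in>carrier F. bp (bm y) = y"
    unfolding retractive_pair_def by auto
  from rpM have M: "left_module R M" and L: "left_module S L"
    and ap: "ap \<in> lmod_hom R M (restrict_scalars \<rho> L)" and am: "am \<in> lmod_hom S L (restrict_scalars \<iota> M)"
    unfolding retractive_pair_def by auto
  from map have \<phi>: "\<phi> \<in> lmod_hom R P M" and \<psi>: "\<psi> \<in> lmod_hom S F L"
    and ap_\<phi>: "\<forall>x\<in>carrier P. ap (\<phi> x) = \<psi> (bp x)" and \<phi>_bm: "\<forall>y\<in>carrier F. \<phi> (bm y) = am (\<psi> y)"
    unfolding rp_mapping_def by auto
  interpret M: left_module R M by fact
  interpret L: left_module S L by fact
  have ap0: "ap \<zero>\<^bsub>M\<^esub> = \<zero>\<^bsub>L\<^esub>" and am0: "am \<zero>\<^bsub>L\<^esub> = \<zero>\<^bsub>M\<^esub>"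
    using abelian_group_hom.hom_zero semilinear_abelian_group_hom[OF _ _ ap] semilinear_abelian_group_hom[OF _ _ am]
      M.abelian_group_axioms L.abelian_group_axioms by blast+
  have sub: "mod_kernel P M \<phi> \<subseteq> carrier P" "mod_kernel F L \<psi> \<subseteq> carrier F"
    by (auto simp: mod_kernel_def)
  have "bp ` mod_kernel P M \<phi> \<subseteq> mod_kernel F L \<psi>"
    using ap_\<phi> ap0 lmod_hom_closed[OF bp] by (auto simp: mod_kernel_def)
  then have "bp \<in> lmod_hom R (P\<lparr>carrier := mod_kernel P M \<phi>\<rparr>) (restrict_scalars \<rho> (F\<lparr>carrier := mod_kernel F L \<psi>\<rparr>))"
    using lmod_hom_restrict_domain[OF bp sub(1)] sub(2)
    by (simp add: restrict_scalars_update_carrier lmod_hom_submodule_iff)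
  moreover have "bm ` mod_kernel F L \<psi> \<subseteq> mod_kernel P M \<phi>"
    using \<phi>_bm am0 lmod_hom_closed[OF bm] by (auto simp: mod_kernel_def)
  then have "bm \<in> lmod_hom S (F\<lparr>carrier := mod_kernel F L \<psi>\<rparr>) (restrict_scalars \<iota> (P\<lparr>carrier := mod_kernel P M \<phi>\<rparr>))"
    using lmod_hom_restrict_domain[OF bm sub(2)] sub(1)
    by (simp add: restrict_scalars_update_carrier lmod_hom_submodule_iff)
  ultimately show ?thesis
    unfolding retractive_pair_def
    using left_module.left_module_kernel[OF P M \<phi>] left_module.left_module_kernel[OF F L \<psi>] bp_bm sub
    by auto
qed

lemma rp_mapping_into_submodules:
  "rp_mapping R S P F bp bm (M\<lparr>carrier := A\<rparr>) (L\<lparr>carrier := B\<rparr>) ap am \<phi> \<psi> \<Longrightarrow> A \<subseteq> carrier M \<Longrightarrow>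
    B \<subseteq> carrier L \<Longrightarrow> rp_mapping R S P F bp bm M L ap am \<phi> \<psi>"
  by (simp add: rp_mapping_def lmod_hom_submodule_iff)

definition free_rp_cover ::
  "('a, 'c) ring_scheme \<Rightarrow> ('s, 'e) ring_scheme \<Rightarrow> ('a \<Rightarrow> 's) \<Rightarrow> ('s \<Rightarrow> 'a) \<Rightarrow>
   ('a, 'm) module \<Rightarrow> ('s, 'l) module \<Rightarrow> ('m \<Rightarrow> 'l) \<Rightarrow> ('l \<Rightarrow> 'm) \<Rightarrow>
   ('a, 'p) module \<Rightarrow> ('s, 'f) module \<Rightarrow> ('p \<Rightarrow> 'f) \<Rightarrow> ('f \<Rightarrow> 'p) \<Rightarrow> ('p \<Rightarrow> 'm) \<Rightarrow> ('f \<Rightarrow> 'l) \<Rightarrow> bool" where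
  "free_rp_cover R S \<rho> \<iota> M L ap am P F bp bm d0 e0 \<longleftrightarrow>
     fg_free R P \<and> fg_free S F \<and> retractive_pair R S \<rho> \<iota> P F bp bm \<and>
     rp_mapping R S P F bp bm M L ap am d0 e0 \<and> d0 ` carrier P = carrier M \<and> e0 ` carrier F = carrier L"

lemma free_rp_cover_exists:
  fixes M :: "('a, 'm) module" and L :: "('s, 'l) module"
  assumes R: "ring R" and S: "ring S" and \<rho>: "\<rho> \<in> ring_hom R S" and \<iota>: "\<iota> \<in> ring_hom S R"
    and \<rho>\<iota>: "\<forall>s\<in>carrier S. \<rho> (\<iota> s) = s"
    and rp: "retractive_pair R S \<rho> \<iota> M L ap am" and FP: "FP n R M"
  obtains P :: "('a, nat \<Rightarrow> 'a) module" and F :: "('s, nat \<Rightarrow> 's) module" and bp bm d0 e0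
  where "free_rp_cover R S \<rho> \<iota> M L ap am P F bp bm d0 e0"
    and "\<And>m. n = Suc m \<Longrightarrow> FP m R (P\<lparr>carrier := mod_kernel P M d0\<rparr>)"
proof -
  interpret R: ring R by fact
  interpret S: ring S by fact
  have M: "left_module R M"
    using rp by (simp add: retractive_pair_def)
  interpret M: left_module R M by fact
  obtain k D0 D where res: "resolution n R M (\<lambda>i. std_free R (k i)) D0 D"
    using FP_std_resolution[OF FP] .
  let ?K = "k 0"
  have D0: "D0 \<in> lmod_hom R (std_free R ?K) M" and D0_onto: "D0 ` carrier (std_free R ?K) = carrier M"
    using resolution_augmentation[OF res] by auto
  obtain N \<delta> where N: "N \<in> lmod_hom R (std_free R ?K) M" and \<delta>: "\<delta> \<in> lmod_hom S (std_free S ?K) L"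
    and ap_D0: "\<And>z. z \<in> carrier (std_free R ?K) \<Longrightarrow> ap (D0 z) = \<delta> (\<lambda>i. \<rho> (z i))"
    and ap_N: "\<And>z. z \<in> carrier (std_free R ?K) \<Longrightarrow> ap (N z) = \<delta> (\<lambda>i. \<rho> (z i))"
    and am_\<delta>: "\<And>y. y \<in> carrier (std_free S ?K) \<Longrightarrow> am (\<delta> y) = N (\<lambda>i. \<iota> (y i))"
    using retractive_pair_lift_basis[OF R S \<rho> \<iota> rp D0] by blast
  have "free_rp_cover R S \<rho> \<iota> M L ap am (std_free R (?K + ?K)) (std_free S ?K)
      (double_plus R \<rho> ?K) (double_minus R \<iota> ?K) (copair R M ?K D0 N) \<delta>"
    unfolding free_rp_cover_def
    using R.std_free_fg_free S.std_free_fg_free double_retractive_pair[OF R S \<rho> \<iota> \<rho>\<iota>, of "k 0"]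
      copair_rp_mapping[where K = "k 0", OF R S \<rho> \<iota> rp D0 N \<delta> ap_D0 ap_N am_\<delta>]
      M.copair_onto[OF D0 N D0_onto] retractive_pair_lift_onto[OF R S \<rho> rp D0_onto \<delta> ap_D0]
    by blast
  moreover have "FP m R ((std_free R (?K + ?K))\<lparr>carrier := mod_kernel (std_free R (?K + ?K)) M (copair R M ?K D0 N)\<rparr>)"
    if "n = Suc m" for m
    using FP_copair_kernel[OF M _ N] res that by blast
  ultimately show ?thesis
    using that by blast
qed

section \<open>Resolutions of retractive pairs\<close>

definition rp_resolution ::
  "nat \<Rightarrow> ('a, 'c) ring_scheme \<Rightarrow> ('s, 'e) ring_scheme \<Rightarrow> ('a \<Rightarrow> 's) \<Rightarrow> ('s \<Rightarrow> 'a) \<Rightarrow>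
   ('a, 'm) module \<Rightarrow> ('s, 'l) module \<Rightarrow> ('m \<Rightarrow> 'l) \<Rightarrow> ('l \<Rightarrow> 'm) \<Rightarrow>
   (nat \<Rightarrow> ('a, 'p) module) \<Rightarrow> (nat \<Rightarrow> ('s, 'f) module) \<Rightarrow> (nat \<Rightarrow> 'p \<Rightarrow> 'f) \<Rightarrow> (nat \<Rightarrow> 'f \<Rightarrow> 'p) \<Rightarrow>
   ('p \<Rightarrow> 'm) \<Rightarrow> ('f \<Rightarrow> 'l) \<Rightarrow> (nat \<Rightarrow> 'p \<Rightarrow> 'p) \<Rightarrow> (nat \<Rightarrow> 'f \<Rightarrow> 'f) \<Rightarrow> bool" where
  "rp_resolution n R S \<rho> \<iota> M L ap am P F bp bm d0 e0 d e \<longleftrightarrow>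
     (\<forall>i\<le>n. fg_free R (P i) \<and> fg_free S (F i) \<and> retractive_pair R S \<rho> \<iota> (P i) (F i) (bp i) (bm i)) \<and>
     rp_mapping R S (P 0) (F 0) (bp 0) (bm 0) M L ap am d0 e0 \<and>
     (\<forall>i\<in>{1..n}. rp_mapping R S (P i) (F i) (bp i) (bm i)
                    (P (i - 1)) (F (i - 1)) (bp (i - 1)) (bm (i - 1)) (d i) (e i)) \<and>
     resolution n R M P d0 d \<and> resolution n S L F e0 e"

definition has_rp_resolution ::
  "nat \<Rightarrow> ('a, 'c) ring_scheme \<Rightarrow> ('s, 'e) ring_scheme \<Rightarrow> ('a \<Rightarrow> 's) \<Rightarrow> ('s \<Rightarrow> 'a) \<Rightarrow>
   ('a, 'm) module \<Rightarrow> ('s, 'l) module \<Rightarrow> ('m \<Rightarrow> 'l) \<Rightarrow> ('l \<Rightarrow> 'm) \<Rightarrow> bool" where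
  "has_rp_resolution n R S \<rho> \<iota> M L ap am \<longleftrightarrow>
     (\<exists>(P :: nat \<Rightarrow> ('a, nat \<Rightarrow> 'a) module) (F :: nat \<Rightarrow> ('s, nat \<Rightarrow> 's) module) bp bm d0 e0 d e.
        rp_resolution n R S \<rho> \<iota> M L ap am P F bp bm d0 e0 d e)"

lemma has_rp_resolution_0:
  fixes P :: "('a, nat \<Rightarrow> 'a) module" and F :: "('s, nat \<Rightarrow> 's) module"
  assumes "free_rp_cover R S \<rho> \<iota> M L ap am P F bp bm d0 e0"
  shows "has_rp_resolution 0 R S \<rho> \<iota> M L ap am"
proof -
  have "rp_resolution 0 R S \<rho> \<iota> M L ap am (\<lambda>_. P) (\<lambda>_. F) (\<lambda>_. bp) (\<lambda>_. bm) d0 e0 (\<lambda>_ x. x) (\<lambda>_ x. x)"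
    using assms by (auto simp: free_rp_cover_def rp_resolution_def resolution_0_iff rp_mapping_def)
  then show ?thesis
    unfolding has_rp_resolution_def by blast
qed

lemma has_rp_resolution_Suc:
  fixes P :: "('a, nat \<Rightarrow> 'a) module" and F :: "('s, nat \<Rightarrow> 's) module"
  assumes cover: "free_rp_cover R S \<rho> \<iota> M L ap am P F bp bm d0 e0"
    and "has_rp_resolution m R S \<rho> \<iota> (P\<lparr>carrier := mod_kernel P M d0\<rparr>) (F\<lparr>carrier := mod_kernel F L e0\<rparr>) bp bm"
  shows "has_rp_resolution (Suc m) R S \<rho> \<iota> M L ap am"
proof -
  obtain P' :: "nat \<Rightarrow> ('a, nat \<Rightarrow> 'a) module" and F' :: "nat \<Rightarrow> ('s, nat \<Rightarrow> 's) module"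
    and bp' bm' d0' e0' d' e' where res: "rp_resolution m R S \<rho> \<iota> (P\<lparr>carrier := mod_kernel P M d0\<rparr>) (F\<lparr>carrier := mod_kernel F L e0\<rparr>)
      bp bm P' F' bp' bm' d0' e0' d' e'"
    using assms(2) unfolding has_rp_resolution_def by blast
  define P'' where "P'' i = (if i = 0 then P else P' (i - 1))" for i
  define F'' where "F'' i = (if i = 0 then F else F' (i - 1))" for i
  define bp'' where "bp'' i = (if i = 0 then bp else bp' (i - 1))" for i
  define bm'' where "bm'' i = (if i = 0 then bm else bm' (i - 1))" for i
  define d'' where "d'' i = (if i = 1 then d0' else d' (i - 1))" for i
  define e'' where "e'' i = (if i = 1 then e0' else e' (i - 1))" for i
  have sub: "mod_kernel P M d0 \<subseteq> carrier P" "mod_kernel F L e0 \<subseteq> carrier F"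
    by (auto simp: mod_kernel_def)
  have "rp_resolution (Suc m) R S \<rho> \<iota> M L ap am P'' F'' bp'' bm'' d0 e0 d'' e''"
    unfolding rp_resolution_def
  proof (intro conjI)
    show "\<forall>i\<le>Suc m. fg_free R (P'' i) \<and> fg_free S (F'' i) \<and> retractive_pair R S \<rho> \<iota> (P'' i) (F'' i) (bp'' i) (bm'' i)"
      using cover res by (auto simp: free_rp_cover_def rp_resolution_def P''_def F''_def bp''_def bm''_def)
    show "rp_mapping R S (P'' 0) (F'' 0) (bp'' 0) (bm'' 0) M L ap am d0 e0"
      using cover by (simp add: free_rp_cover_def P''_def F''_def bp''_def bm''_def)
    show "\<forall>i\<in>{1..Suc m}. rp_mapping R S (P'' i) (F'' i) (bp'' i) (bm'' i)
      (P'' (i - 1)) (F'' (i - 1)) (bp'' (i - 1)) (bm'' (i - 1)) (d'' i) (e'' i)"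
      unfolding ball_atLeastAtMost_Suc
      using res rp_mapping_into_submodules[OF _ sub]
      by (auto simp: rp_resolution_def P''_def F''_def bp''_def bm''_def d''_def e''_def)
    show "resolution (Suc m) R M P'' d0 d''"
      unfolding P''_def d''_def
      by (rule resolution_SucI) (use cover res in \<open>auto simp: free_rp_cover_def rp_mapping_def rp_resolution_def\<close>)
    show "resolution (Suc m) S L F'' e0 e''"
      unfolding F''_def e''_def
      by (rule resolution_SucI) (use cover res in \<open>auto simp: free_rp_cover_def rp_mapping_def rp_resolution_def\<close>)
  qed
  then show ?thesis
    unfolding has_rp_resolution_def by blast
qed

lemma has_rp_resolution_step:
  fixes M :: "('a, 'm) module" and L :: "('s, 'l) module"
  assumes R: "ring R" and S: "ring S" and \<rho>: "\<rho> \<in> ring_hom R S" and \<iota>: "\<iota> \<in> ring_hom S R"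
    and \<rho>\<iota>: "\<forall>s\<in>carrier S. \<rho> (\<iota> s) = s"
    and rp: "retractive_pair R S \<rho> \<iota> M L ap am" and FP: "FP n R M"
    and kernel: "\<And>m (M' :: ('a, nat \<Rightarrow> 'a) module) (L' :: ('s, nat \<Rightarrow> 's) module) ap' am'.
      n = Suc m \<Longrightarrow> retractive_pair R S \<rho> \<iota> M' L' ap' am' \<Longrightarrow> FP m R M' \<Longrightarrow>
      has_rp_resolution m R S \<rho> \<iota> M' L' ap' am'"
  shows "has_rp_resolution n R S \<rho> \<iota> M L ap am"
proof -
  obtain P :: "('a, nat \<Rightarrow> 'a) module" and F :: "('s, nat \<Rightarrow> 's) module" and bp bm d0 e0
    where cover: "free_rp_cover R S \<rho> \<iota> M L ap am P F bp bm d0 e0"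
      and FP_kernel: "\<And>m. n = Suc m \<Longrightarrow> FP m R (P\<lparr>carrier := mod_kernel P M d0\<rparr>)"
    using free_rp_cover_exists[OF R S \<rho> \<iota> \<rho>\<iota> rp FP] by blast
  show ?thesis
  proof (cases n)
    case 0
    then show ?thesis
      using has_rp_resolution_0[OF cover] by simp
  next
    case (Suc m)
    have "retractive_pair R S \<rho> \<iota> (P\<lparr>carrier := mod_kernel P M d0\<rparr>) (F\<lparr>carrier := mod_kernel F L e0\<rparr>) bp bm"
      using cover rp by (intro retractive_pair_kernel) (auto simp: free_rp_cover_def)
    with Suc show ?thesis
      using has_rp_resolution_Suc[OF cover] kernel FP_kernel by blast
  qed
qed

text \<open>Kernels of free modules have carrier type \<open>nat \<Rightarrow> 'a\<close>, so the induction runs over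
  retractive pairs of that type; \<open>has_rp_resolution_step\<close> then starts it from any carrier type.\<close>

lemma has_rp_resolution_std:
  fixes M :: "('a, nat \<Rightarrow> 'a) module" and L :: "('s, nat \<Rightarrow> 's) module"
  assumes R: "ring R" and S: "ring S" and \<rho>: "\<rho> \<in> ring_hom R S" and \<iota>: "\<iota> \<in> ring_hom S R"
    and \<rho>\<iota>: "\<forall>s\<in>carrier S. \<rho> (\<iota> s) = s"
  shows "retractive_pair R S \<rho> \<iota> M L ap am \<Longrightarrow> FP n R M \<Longrightarrow> has_rp_resolution n R S \<rho> \<iota> M L ap am"
proof (induction n arbitrary: M L ap am)
  case 0
  show ?case
    by (rule has_rp_resolution_step[OF R S \<rho> \<iota> \<rho>\<iota> 0]) simp
next
  case (Suc n)
  show ?case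
    by (rule has_rp_resolution_step[OF R S \<rho> \<iota> \<rho>\<iota> Suc.prems]) (use Suc.IH in blast)
qed

lemma FP_imp_has_rp_resolution:
  assumes "ring R" "ring S" "\<rho> \<in> ring_hom R S" "\<iota> \<in> ring_hom S R" "\<forall>s\<in>carrier S. \<rho> (\<iota> s) = s"
    and "retractive_pair R S \<rho> \<iota> M L ap am" "FP n R M"
  shows "has_rp_resolution n R S \<rho> \<iota> M L ap am"
  using assms has_rp_resolution_std[OF assms(1-5)] by (rule has_rp_resolution_step)

lemma rp_resolution_imp_FP:
  "rp_resolution n R S \<rho> \<iota> M L ap am (P :: nat \<Rightarrow> ('a, nat \<Rightarrow> 'a) module) (F :: nat \<Rightarrow> ('s, nat \<Rightarrow> 's) module)
     bp bm d0 e0 d e \<Longrightarrow> left_module S L \<Longrightarrow> FP n S L"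
  unfolding rp_resolution_def FP_iff_resolution by blast

theorem proposition1:
  fixes R :: "('a, 'c) ring_scheme" and S :: "('s, 'e) ring_scheme"
    and \<rho> :: "'a \<Rightarrow> 's" and \<iota> :: "'s \<Rightarrow> 'a"
    and M :: "('a, 'm) module" and L :: "('s, 'l) module"
    and ap :: "'m \<Rightarrow> 'l" and am :: "'l \<Rightarrow> 'm" and n :: nat
  assumes "ring R" and "ring S"
    and "\<rho> \<in> ring_hom R S" and "\<iota> \<in> ring_hom S R"
    and "\<forall>s\<in>carrier S. \<rho> (\<iota> s) = s"
    and "retractive_pair R S \<rho> \<iota> M L ap am"
    and "FP n R M"
  shows "\<exists>(P :: nat \<Rightarrow> ('a, nat \<Rightarrow> 'a) module) (F :: nat \<Rightarrow> ('s, nat \<Rightarrow> 's) module)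
            bp bm d0 e0 d e.
     (\<forall>i\<le>n. fg_free R (P i) \<and> fg_free S (F i) \<and>
             retractive_pair R S \<rho> \<iota> (P i) (F i) (bp i) (bm i)) \<and>
     rp_mapping R S (P 0) (F 0) (bp 0) (bm 0) M L ap am d0 e0 \<and>
     (\<forall>i\<in>{1..n}. rp_mapping R S (P i) (F i) (bp i) (bm i)
                    (P (i - 1)) (F (i - 1)) (bp (i - 1)) (bm (i - 1)) (d i) (e i)) \<and>
     d0 ` carrier (P 0) = carrier M \<and> e0 ` carrier (F 0) = carrier L \<and>
     (1 \<le> n \<longrightarrow> d 1 ` carrier (P 1) = mod_kernel (P 0) M d0 \<and>
                  e 1 ` carrier (F 1) = mod_kernel (F 0) L e0) \<and>
     (\<forall>i. 1 \<le> i \<and> i < n \<longrightarrow>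
        d (Suc i) ` carrier (P (Suc i)) = mod_kernel (P i) (P (i - 1)) (d i) \<and>
        e (Suc i) ` carrier (F (Suc i)) = mod_kernel (F i) (F (i - 1)) (e i)) \<and>
     FP n S L"
proof -
  obtain P :: "nat \<Rightarrow> ('a, nat \<Rightarrow> 'a) module" and F :: "nat \<Rightarrow> ('s, nat \<Rightarrow> 's) module"
    and bp bm d0 e0 d e where res: "rp_resolution n R S \<rho> \<iota> M L ap am P F bp bm d0 e0 d e"
    using FP_imp_has_rp_resolution[OF assms] unfolding has_rp_resolution_def by blast
  have "FP n S L"
    using rp_resolution_imp_FP[OF res] assms(6) by (simp add: retractive_pair_def)
  then show ?thesis
    using res unfolding rp_resolution_def resolution_def
    by (intro exI[of _ P] exI[of _ F] exI[of _ bp] exI[of _ bm] exI[of _ d0] exI[of _ e0] exI[of _ d] exI[of _ e]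
        conjI) auto
qed

end
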